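(* Let $\mathcal H$ be an infinite-dimensional complex Hilbert space. Then the set $\mathcal R_f(\mathcal H)$ of regular forms in $\mathcal V_f(\mathcal H)$ and the set $\mathcal S_f(\mathcal H)$ of singular forms in $\mathcal V_f(\mathcal H)$ are sub-generalized effect algebras of the generalized effect algebra $(\mathcal V_f(\mathcal H);\overline\oplus,o)$.
   Context: Bilinear forms $t$ on $\mathcal H$ are sesquilinear maps $D(t)\times D(t)\to\mathbb C$ on a dense linear subspace $D(t)$ (linear in the first argument); $t$ is positive if $t(x,x)\ge0$ on $D(t)$, bounded if $\sup\{t(x,x)\mid x\in D(t),\|x\|=1\}<\infty$. The sum $t+s$ has domain $D(t)\cap D(s)$. $o$ is the zero form on $\mathcal H$. $\mathcal V_f(\mathcal H)$ is the set of positive bilinear forms with dense domain such that $D(t)=\mathcal H$ whenever $t$ is bounded; $t\oplus s$ is defined iff $t$ or $s$ is bounded or $D(t)=D(s)$, and then $t\oplus s=t+s$. A positive form is closed if $D(t)$ is a Hilbert space under $(x,y)_t=t(x,y)+(1+m_t)(x,y)$, $m_t=\inf\{t(x,x)\mid x\in D(t),\|x\|=1\}$; closable if it has a closed extension. For a positive form $t$, the regular part $t_r$ is the largest closable positive form with domain $D(t)$ satisfying $t_r(x,x)\le t(x,x)$ for all $x\in D(t)$, and the singular part is $t_s=t-t_r$; $t$ is regular if $t_s=0$ and singular if $t_r=0$. The operation $\overline\oplus$: $t\,\overline\oplus\,s$ is defined iff $t\oplus s$ is defined and $(t+s)_r=t_r+s_r$, and then equals $t+s$; $(\mathcal V_f(\mathcal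 H);\overline\oplus,o)$ is a generalized effect algebra. A subset $Q$ of a generalized effect algebra $(E;\oplus,0)$ is a sub-generalized effect algebra if $0\in Q$ and whenever $x\oplus y=z$ in $E$ with two of $x,y,z$ in $Q$, all three are in $Q$. *)

theory Defs
  imports "HOL-Analysis.Analysis"
begin

class complex_inner = ab_group_add +
  fixes scaleC :: "complex \<Rightarrow> 'a \<Rightarrow> 'a"
    and cinner :: "'a \<Rightarrow> 'a \<Rightarrow> complex"
  assumes scaleC_add_right: "scaleC a (x + y) = scaleC a x + scaleC a y"
    and scaleC_add_left: "scaleC (a + b) x = scaleC a x + scaleC b x"
    and scaleC_scaleC: "scaleC a (scaleC b x) = scaleC (a * b) x"
    and scaleC_one: "scaleC 1 x = x"
    and cinner_add_left: "cinner (x + y) z = cinner x z + cinner y z"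
    and cinner_scaleC_left: "cinner (scaleC a x) y = a * cinner x y"
    and cinner_cnj_commute: "cinner y x = cnj (cinner x y)"
    and cinner_nonneg: "0 \<le> Re (cinner x x)"
    and cinner_eq_zero: "cinner x x = 0 \<Longrightarrow> x = 0"

definition hnorm :: "'a::complex_inner \<Rightarrow> real" where
  "hnorm x = sqrt (Re (cinner x x))"

class chilbert = complex_inner +
  assumes hilbert_complete:
    "(\<forall>e>0. \<exists>N::nat. \<forall>m\<ge>N. \<forall>n\<ge>N. sqrt (Re (cinner (X m - X n) (X m - X n))) < e)
     \<Longrightarrow> (\<exists>L::'a. \<forall>e>0. \<exists>N::nat. \<forall>n\<ge>N. sqrt (Re (cinner (X n - L) (X n - L))) < e)"

definition cspan :: "'a::complex_inner set \<Rightarrow> 'a set" where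
  "cspan S = {x. \<exists>F c. finite F \<and> F \<subseteq> S \<and> x = (\<Sum>v\<in>F. scaleC (c v) v)}"

definition infinite_dimensional :: "'a::complex_inner set \<Rightarrow> bool" where
  "infinite_dimensional H \<longleftrightarrow> (\<forall>S. finite S \<and> S \<subseteq> H \<longrightarrow> cspan S \<noteq> H)"

definition lin_subspace :: "'a::complex_inner set \<Rightarrow> bool" where
  "lin_subspace D \<longleftrightarrow> 0 \<in> D \<and> (\<forall>x\<in>D. \<forall>y\<in>D. x + y \<in> D) \<and> (\<forall>a. \<forall>x\<in>D. scaleC a x \<in> D)"

definition dense_set :: "'a::complex_inner set \<Rightarrow> bool" where
  "dense_set D \<longleftrightarrow> (\<forall>x. \<forall>e>0. \<exists>y\<in>D. hnorm (x - y) < e)"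

text \<open>A form is a pair (domain, values). Convention: values outside D(t) x D(t) are 0,
  so that equality of pairs is equality of forms.\<close>
type_synonym 'a sform = "'a set \<times> ('a \<Rightarrow> 'a \<Rightarrow> complex)"

definition fdom :: "'a sform \<Rightarrow> 'a set" where "fdom t = fst t"
definition fval :: "'a sform \<Rightarrow> 'a \<Rightarrow> 'a \<Rightarrow> complex" where "fval t = snd t"

definition is_sesq_form :: "'a::complex_inner sform \<Rightarrow> bool" where
  "is_sesq_form t \<longleftrightarrow> lin_subspace (fdom t)
    \<and> (\<forall>x\<in>fdom t. \<forall>y\<in>fdom t. \<forall>z\<in>fdom t.
         fval t (x + y) z = fval t x z + fval t y z \<and> fval t z (x + y) = fval t z x + fval t z y)
    \<and> (\<forall>a. \<forall>x\<in>fdom t. \<forall>y\<in>fdom t.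
         fval t (scaleC a x) y = a * fval t x y \<and> fval t x (scaleC a y) = cnj a * fval t x y)
    \<and> (\<forall>x y. \<not> (x \<in> fdom t \<and> y \<in> fdom t) \<longrightarrow> fval t x y = 0)"

text \<open>Bilinear form in the paper's sense: sesquilinear on a dense linear subspace.\<close>
definition bilinear_form :: "'a::complex_inner sform \<Rightarrow> bool" where
  "bilinear_form t \<longleftrightarrow> is_sesq_form t \<and> dense_set (fdom t)"

definition positive_form :: "'a::complex_inner sform \<Rightarrow> bool" where
  "positive_form t \<longleftrightarrow> (\<forall>x\<in>fdom t. Im (fval t x x) = 0 \<and> 0 \<le> Re (fval t x x))"

definition bounded_form :: "'a::complex_inner sform \<Rightarrow> bool" where
  "bounded_form t \<longleftrightarrow> bdd_above {Re (fval t x x) | x. x \<in> fdom t \<and> hnorm x = 1}"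

definition zero_form :: "'a::complex_inner sform" where
  "zero_form = (UNIV, (\<lambda>x y. 0))"

definition form_add :: "'a::complex_inner sform \<Rightarrow> 'a sform \<Rightarrow> 'a sform" where
  "form_add t s = (fdom t \<inter> fdom s,
     (\<lambda>x y. if x \<in> fdom t \<inter> fdom s \<and> y \<in> fdom t \<inter> fdom s then fval t x y + fval s x y else 0))"

definition form_diff :: "'a::complex_inner sform \<Rightarrow> 'a sform \<Rightarrow> 'a sform" where
  "form_diff t s = (fdom t \<inter> fdom s,
     (\<lambda>x y. if x \<in> fdom t \<inter> fdom s \<and> y \<in> fdom t \<inter> fdom s then fval t x y - fval s x y else 0))"

definition is_zero_form :: "'a::complex_inner sform \<Rightarrow> bool" where
  "is_zero_form t \<longleftrightarrow> (\<forall>x\<in>fdom t. \<forall>y\<in>fdom t. fval t x y = 0)"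

definition Vf :: "'a::complex_inner sform set" where
  "Vf = {t. bilinear_form t \<and> positive_form t \<and> (bounded_form t \<longrightarrow> fdom t = UNIV)}"

definition oplus_defined :: "'a::complex_inner sform \<Rightarrow> 'a sform \<Rightarrow> bool" where
  "oplus_defined t s \<longleftrightarrow> bounded_form t \<or> bounded_form s \<or> fdom t = fdom s"

definition lower_bound_form :: "'a::complex_inner sform \<Rightarrow> real" where
  "lower_bound_form t = Inf {Re (fval t x x) | x. x \<in> fdom t \<and> hnorm x = 1}"

text \<open>Norm induced by (x,y)_t = t(x,y) + (1 + m_t)(x,y).\<close>
definition tnorm :: "'a::complex_inner sform \<Rightarrow> 'a \<Rightarrow> real" where
  "tnorm t x = sqrt (Re (fval t x x + complex_of_real (1 + lower_bound_form t) * cinner x x))"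

definition is_closed_form :: "'a::complex_inner sform \<Rightarrow> bool" where
  "is_closed_form t \<longleftrightarrow> positive_form t \<and>
    (\<forall>X::nat \<Rightarrow> 'a. (\<forall>n. X n \<in> fdom t) \<and> (\<forall>e>0. \<exists>N. \<forall>m\<ge>N. \<forall>n\<ge>N. tnorm t (X m - X n) < e)
      \<longrightarrow> (\<exists>L\<in>fdom t. \<forall>e>0. \<exists>N. \<forall>n\<ge>N. tnorm t (X n - L) < e))"

definition is_closable_form :: "'a::complex_inner sform \<Rightarrow> bool" where
  "is_closable_form t \<longleftrightarrow> (\<exists>s. is_sesq_form s \<and> positive_form s \<and> is_closed_form s \<and>
      fdom t \<subseteq> fdom s \<and> (\<forall>x\<in>fdom t. \<forall>y\<in>fdom t. fval s x y = fval t x y))"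

definition regular_candidates :: "'a::complex_inner sform \<Rightarrow> 'a sform set" where
  "regular_candidates t = {r. bilinear_form r \<and> positive_form r \<and> is_closable_form r \<and>
      fdom r = fdom t \<and> (\<forall>x\<in>fdom t. Re (fval r x x) \<le> Re (fval t x x))}"

definition regular_part :: "'a::complex_inner sform \<Rightarrow> 'a sform" where
  "regular_part t = (THE r. r \<in> regular_candidates t \<and>
      (\<forall>r'\<in>regular_candidates t. \<forall>x\<in>fdom t. Re (fval r' x x) \<le> Re (fval r x x)))"

definition singular_part :: "'a::complex_inner sform \<Rightarrow> 'a sform" where
  "singular_part t = form_diff t (regular_part t)"

definition regular_form :: "'a::complex_inner sform \<Rightarrow> bool" where
  "regular_form t \<longleftrightarrow> is_zero_form (singular_part t)"

definition singular_form :: "'a::complex_inner sform \<Rightarrow> bool" where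
  "singular_form t \<longleftrightarrow> is_zero_form (regular_part t)"

definition oplus_bar :: "'a::complex_inner sform \<Rightarrow> 'a sform \<Rightarrow> 'a sform option" where
  "oplus_bar t s = (if oplus_defined t s \<and>
        regular_part (form_add t s) = form_add (regular_part t) (regular_part s)
     then Some (form_add t s) else None)"

definition Rf :: "'a::complex_inner sform set" where
  "Rf = {t \<in> Vf. regular_form t}"

definition Sf :: "'a::complex_inner sform set" where
  "Sf = {t \<in> Vf. singular_form t}"

definition sub_gea :: "'b set \<Rightarrow> ('b \<Rightarrow> 'b \<Rightarrow> 'b option) \<Rightarrow> 'b \<Rightarrow> 'b set \<Rightarrow> bool" where
  "sub_gea E op z Q \<longleftrightarrow> Q \<subseteq> E \<and> z \<in> Q \<and>
    (\<forall>x\<in>E. \<forall>y\<in>E. \<forall>w\<in>E. op x y = Some w \<longrightarrow>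
       ((x \<in> Q \<and> y \<in> Q) \<or> (x \<in> Q \<and> w \<in> Q) \<or> (y \<in> Q \<and> w \<in> Q)) \<longrightarrow>
       x \<in> Q \<and> y \<in> Q \<and> w \<in> Q)"

end

theory Submission
  imports Defs
begin

text \<open>
  The regular part is defined as the maximum of a family of forms, so the real task is to show
  that this maximum exists. We use Simon's construction: for a positive form t, the lower
  semicontinuous envelope (the infimum of lim t[z_n] over t-Cauchy sequences z_n converging to x
  in H) satisfies the parallelogram law and is homogeneous, hence by Jordan-von Neumann it is the
  quadratic form of a sesquilinear form; this form is closed, and it dominates every closable
  form r below t, since closability forces r[x - z_n] to tend to 0. Its restriction to D(t) is
  therefore t_r.

  Now let t and s combine to w with w_r = t_r + s_r. Regularity (t = t_r) and singularity
  (t_r = 0) of both t and s pass to w. Conversely, if t and w are regular (singular), then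
  s - s_r (resp. s_r) is a positive form below s that vanishes on D(t) \<inter> D(s). This set is D(s)
  unless s is bounded; then D(s) = H, the form is bounded too, and vanishing on the dense set
  D(t) makes it vanish. Infinite dimension is used only to have unit vectors in dense subspaces.
\<close>

section \<open>Sesquilinear forms on subspaces\<close>

lemma scaleC_zero_left [simp]: "scaleC 0 (x::'a::complex_inner) = 0"
proof -
  have "scaleC 0 x + scaleC 0 x = scaleC 0 x + 0"
    using scaleC_add_left[of 0 0 x] by simp
  thus ?thesis by (metis add_left_cancel)
qed

lemma scaleC_zero_right [simp]: "scaleC a (0::'a::complex_inner) = 0"
proof -
  have "scaleC a 0 + scaleC a 0 = scaleC a (0::'a) + 0"
    using scaleC_add_right[of a "0::'a" 0] by simp
  thus ?thesis by (metis add_left_cancel)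
qed

lemma scaleC_minus_left: "scaleC (- a) (x::'a::complex_inner) = - scaleC a x"
  using scaleC_add_left[of a "-a" x] by (simp add: eq_neg_iff_add_eq_0 add.commute)

lemma scaleC_minus_right: "scaleC a (- x::'a::complex_inner) = - scaleC a x"
  using scaleC_add_right[of a x "-x"] by (simp add: eq_neg_iff_add_eq_0 add.commute)

lemma scaleC_diff_right: "scaleC a (x - y::'a::complex_inner) = scaleC a x - scaleC a y"
  using scaleC_add_right[of a x "-y"] by (simp add: scaleC_minus_right)

lemma scaleC_diff_left: "scaleC (a - b) (x::'a::complex_inner) = scaleC a x - scaleC b x"
  using scaleC_add_left[of a "-b" x] by (simp add: scaleC_minus_left)

lemma scaleC_minus_one: "scaleC (-1) (x::'a::complex_inner) = - x"
  by (simp add: scaleC_minus_left scaleC_one)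

lemma cinner_add_right: "cinner (z::'a::complex_inner) (x + y) = cinner z x + cinner z y"
  by (metis cinner_add_left cinner_cnj_commute complex_cnj_add)

lemma cinner_scaleC_right: "cinner (x::'a::complex_inner) (scaleC a y) = cnj a * cinner x y"
  by (metis cinner_scaleC_left cinner_cnj_commute complex_cnj_mult)

lemma Im_cinner_self: "Im (cinner (x::'a::complex_inner) x) = 0"
proof -
  have "cinner x x = cnj (cinner x x)" by (rule cinner_cnj_commute)
  from arg_cong[OF this, of Im] show ?thesis by simp
qed

definition sesq_on :: "'a::complex_inner set \<Rightarrow> ('a \<Rightarrow> 'a \<Rightarrow> complex) \<Rightarrow> bool" where
  "sesq_on D f \<longleftrightarrow> lin_subspace D
    \<and> (\<forall>x\<in>D. \<forall>y\<in>D. \<forall>z\<in>D. f (x + y) z = f x z + f y z \<and> f z (x + y) = f z x + f z y)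
    \<and> (\<forall>a. \<forall>x\<in>D. \<forall>y\<in>D. f (scaleC a x) y = a * f x y \<and> f x (scaleC a y) = cnj a * f x y)"

definition pos_on :: "'a::complex_inner set \<Rightarrow> ('a \<Rightarrow> 'a \<Rightarrow> complex) \<Rightarrow> bool" where
  "pos_on D f \<longleftrightarrow> (\<forall>x\<in>D. Im (f x x) = 0 \<and> 0 \<le> Re (f x x))"

lemma sesq_on_fval: "is_sesq_form t \<Longrightarrow> sesq_on (fdom t) (fval t)"
  unfolding is_sesq_form_def sesq_on_def by blast

lemma pos_on_fval: "positive_form t \<Longrightarrow> pos_on (fdom t) (fval t)"
  unfolding positive_form_def pos_on_def by blast

lemma sesq_on_cinner: "sesq_on UNIV (cinner :: 'a::complex_inner \<Rightarrow> _)"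
  unfolding sesq_on_def lin_subspace_def
  by (simp add: cinner_add_left cinner_add_right cinner_scaleC_left cinner_scaleC_right)

lemma pos_on_cinner: "pos_on UNIV (cinner :: 'a::complex_inner \<Rightarrow> _)"
  unfolding pos_on_def by (simp add: Im_cinner_self cinner_nonneg)

lemma lin_subspace_zero: "lin_subspace D \<Longrightarrow> 0 \<in> D"
  by (simp add: lin_subspace_def)
lemma lin_subspace_add: "lin_subspace D \<Longrightarrow> x \<in> D \<Longrightarrow> y \<in> D \<Longrightarrow> x + y \<in> D"
  by (simp add: lin_subspace_def)
lemma lin_subspace_scaleC: "lin_subspace D \<Longrightarrow> x \<in> D \<Longrightarrow> scaleC a x \<in> D"
  by (simp add: lin_subspace_def)
lemma lin_subspace_minus: "lin_subspace D \<Longrightarrow> x \<in> D \<Longrightarrow> - x \<in> D"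
  by (metis lin_subspace_scaleC scaleC_minus_one)
lemma lin_subspace_diff: "lin_subspace D \<Longrightarrow> x \<in> D \<Longrightarrow> y \<in> D \<Longrightarrow> x - y \<in> D"
  by (metis lin_subspace_add lin_subspace_minus diff_conv_add_uminus)
lemma lin_subspace_sum: "lin_subspace D \<Longrightarrow> (\<And>k. k \<in> A \<Longrightarrow> x k \<in> D) \<Longrightarrow> sum x A \<in> D"
  by (induction A rule: infinite_finite_induct) (auto simp: lin_subspace_zero lin_subspace_add)

context
  fixes D and f :: "'a::complex_inner \<Rightarrow> 'a \<Rightarrow> complex"
  assumes S: "sesq_on D f"
begin

lemma sesq_on_lin_subspace: "lin_subspace D" using S by (simp add: sesq_on_def)

lemma sesq_on_add_left: "x \<in> D \<Longrightarrow> y \<in> D \<Longrightarrow> z \<in> D \<Longrightarrow> f (x + y) z = f x z + f y z"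
  using S by (simp add: sesq_on_def)
lemma sesq_on_add_right: "x \<in> D \<Longrightarrow> y \<in> D \<Longrightarrow> z \<in> D \<Longrightarrow> f z (x + y) = f z x + f z y"
  using S by (simp add: sesq_on_def)
lemma sesq_on_scaleC_left: "x \<in> D \<Longrightarrow> y \<in> D \<Longrightarrow> f (scaleC a x) y = a * f x y"
  using S by (simp add: sesq_on_def)
lemma sesq_on_scaleC_right: "x \<in> D \<Longrightarrow> y \<in> D \<Longrightarrow> f x (scaleC a y) = cnj a * f x y"
  using S by (simp add: sesq_on_def)

lemma sesq_on_expand: assumes "x \<in> D" "y \<in> D"
  shows "f (x + scaleC c y) (x + scaleC c y) = f x x + cnj c * f x y + c * f y x + (c * cnj c) * f y y"
proof -
  have cy: "scaleC c y \<in> D" using assms sesq_on_lin_subspace lin_subspace_scaleC by blast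
  have "f (x + scaleC c y) (x + scaleC c y) = f x (x + scaleC c y) + f (scaleC c y) (x + scaleC c y)"
    using sesq_on_add_left assms cy sesq_on_lin_subspace lin_subspace_add by blast
  also have "\<dots> = f x x + f x (scaleC c y) + (f (scaleC c y) x + f (scaleC c y) (scaleC c y))"
    using sesq_on_add_right assms cy by simp
  also have "\<dots> = f x x + cnj c * f x y + (c * f y x + c * (cnj c * f y y))"
    using sesq_on_scaleC_left sesq_on_scaleC_right assms cy by simp
  finally show ?thesis by (simp add: algebra_simps)
qed

lemma sesq_on_zero_left: "x \<in> D \<Longrightarrow> f 0 x = 0"
  using sesq_on_scaleC_left[of x x 0] by simp

lemma sesq_on_polarization: assumes "x \<in> D" "y \<in> D"
  shows "f x y = (f (x + scaleC 1 y) (x + scaleC 1 y) - f (x + scaleC (-1) y) (x + scaleC (-1) y)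
     + \<i> * f (x + scaleC \<i> y) (x + scaleC \<i> y) - \<i> * f (x + scaleC (-\<i>) y) (x + scaleC (-\<i>) y)) / 4"
  using assms by (simp add: sesq_on_expand algebra_simps)

lemma sesq_on_zero_if_diag_zero: assumes "\<forall>z\<in>D. f z z = 0" "x \<in> D" "y \<in> D"
  shows "f x y = 0"
proof -
  have "\<And>c. x + scaleC c y \<in> D"
    using assms sesq_on_lin_subspace lin_subspace_add lin_subspace_scaleC by blast
  thus ?thesis using sesq_on_polarization[OF assms(2,3)] assms(1) by simp
qed

end

lemma sesq_on_eq_if_diag_eq: assumes S: "sesq_on D f" and "sesq_on D g" "\<forall>z\<in>D. f z z = g z z" "x \<in> D" "y \<in> D"
  shows "f x y = g x y"
proof -
  have "\<And>c. x + scaleC c y \<in> D"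
    using assms sesq_on_lin_subspace[OF S] lin_subspace_add lin_subspace_scaleC by blast
  hence "f x y * 4 = g x y * 4"
    using sesq_on_polarization[OF S assms(4,5)] sesq_on_polarization[OF assms(2) assms(4,5)] assms(3)
      by simp
  thus ?thesis by simp
qed

definition quad :: "('a \<Rightarrow> 'a \<Rightarrow> complex) \<Rightarrow> 'a \<Rightarrow> real" where
  "quad f x = Re (f x x)"

lemma quadratic_nonneg_imp_discriminant: fixes a b c :: real
  assumes "\<forall>l. 0 \<le> a + l * b + l^2 * c" "0 \<le> c"
  shows "b^2 \<le> 4 * a * c"
proof (cases "c = 0")
  case True
  show ?thesis
  proof (rule ccontr)
    assume "\<not> ?thesis"
    hence "b \<noteq> 0" using True by simp
    have "0 \<le> a + (-(a+1)/b) * b + (-(a+1)/b)^2 * c" using assms(1) by blast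
    thus False using True \<open>b \<noteq> 0\<close> by simp
  qed
next
  case False
  hence c: "c > 0" using assms(2) by simp
  have "0 \<le> a + (-b/(2*c)) * b + (-b/(2*c))^2 * c" using assms(1) by blast
  hence "0 \<le> (a + (-b/(2*c)) * b + (-b/(2*c))^2 * c) * (4*c)" using c by simp
  also have "\<dots> = 4*a*c - b^2" using c by (simp add: field_simps power2_eq_square)
  finally show ?thesis by simp
qed

context
  fixes D and f :: "'a::complex_inner \<Rightarrow> 'a \<Rightarrow> complex"
  assumes S: "sesq_on D f" and P: "pos_on D f"
begin

lemma quad_nonneg: "x \<in> D \<Longrightarrow> 0 \<le> quad f x"
  using P by (simp add: pos_on_def quad_def)

lemma diag_eq_quad: "x \<in> D \<Longrightarrow> f x x = complex_of_real (quad f x)"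
  using P by (simp add: pos_on_def quad_def complex_eq_iff)

lemma quad_scaleC: "x \<in> D \<Longrightarrow> quad f (scaleC c x) = (cmod c)^2 * quad f x"
proof -
  assume x: "x \<in> D"
  have "f (scaleC c x) (scaleC c x) = c * (cnj c * f x x)"
    using sesq_on_scaleC_left[OF S] sesq_on_scaleC_right[OF S] x sesq_on_lin_subspace[OF S] lin_subspace_scaleC
      by metis
  also have "\<dots> = complex_of_real ((cmod c)^2) * f x x"
    by (subst complex_norm_square) (simp add: mult.assoc)
  finally show ?thesis unfolding quad_def by simp
qed

lemma quad_minus: "x \<in> D \<Longrightarrow> quad f (- x) = quad f x"
  using quad_scaleC[of x "-1"] by (simp add: scaleC_minus_one)

lemma quad_zero: "quad f 0 = 0"
  using sesq_on_zero_left[OF S] lin_subspace_zero[OF sesq_on_lin_subspace[OF S]] by (simp add: quad_def)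

lemma quad_add_scaleR: assumes "x \<in> D" "y \<in> D"
  shows "quad f (x + scaleC (complex_of_real l) y) = quad f x + l * Re (f x y + f y x) + l^2 * quad f y"
  using sesq_on_expand[OF S assms, of "complex_of_real l"]
  by (simp add: quad_def power2_eq_square distrib_left)

lemma quad_add: assumes "x \<in> D" "y \<in> D"
  shows "quad f (x + y) = quad f x + Re (f x y + f y x) + quad f y"
  using quad_add_scaleR[OF assms, of 1] by (simp add: scaleC_one)

lemma quad_diff: assumes "x \<in> D" "y \<in> D"
  shows "quad f (x - y) = quad f x - Re (f x y + f y x) + quad f y"
  using quad_add_scaleR[OF assms, of "-1"] by (simp add: scaleC_minus_one)

lemma quad_parallelogram: assumes "x \<in> D" "y \<in> D"
  shows "quad f (x + y) + quad f (x - y) = 2 * quad f x + 2 * quad f y"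
  using quad_add[OF assms] quad_diff[OF assms] by simp

lemma Re_cross_le_sqrt_quad: assumes "x \<in> D" "y \<in> D"
  shows "Re (f x y + f y x) \<le> 2 * sqrt (quad f x) * sqrt (quad f y)"
proof -
  let ?b = "Re (f x y + f y x)"
  have "\<forall>l. 0 \<le> quad f x + l * ?b + l^2 * quad f y"
  proof
    fix l
    have "x + scaleC (complex_of_real l) y \<in> D"
      using assms sesq_on_lin_subspace[OF S] lin_subspace_add lin_subspace_scaleC by blast
    thus "0 \<le> quad f x + l * ?b + l^2 * quad f y" using quad_nonneg quad_add_scaleR[OF assms]
      by metis
  qed
  hence "?b^2 \<le> 4 * quad f x * quad f y" using quadratic_nonneg_imp_discriminant quad_nonneg assms
    by blast
  hence "sqrt (?b^2) \<le> sqrt (4 * quad f x * quad f y)" using real_sqrt_le_mono by blast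
  hence "\<bar>?b\<bar> \<le> 2 * sqrt (quad f x) * sqrt (quad f y)"
    by (simp add: real_sqrt_mult)
  thus ?thesis by simp
qed

lemma sqrt_quad_add_le: assumes "x \<in> D" "y \<in> D"
  shows "sqrt (quad f (x + y)) \<le> sqrt (quad f x) + sqrt (quad f y)"
proof -
  have le: "quad f (x + y) \<le> (sqrt (quad f x) + sqrt (quad f y))^2"
    using quad_add[OF assms] Re_cross_le_sqrt_quad[OF assms] quad_nonneg assms
    by (simp add: power2_sum)
  show ?thesis using real_sqrt_le_mono[OF le] quad_nonneg assms by simp
qed

lemma sqrt_quad_diff_le: assumes "x \<in> D" "y \<in> D"
  shows "sqrt (quad f (x - y)) \<le> sqrt (quad f x) + sqrt (quad f y)"
  using sqrt_quad_add_le[of x "-y"] assms quad_minus lin_subspace_minus[OF sesq_on_lin_subspace[OF S]]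
    by simp

lemma quad_diff_commute: assumes "x \<in> D" "y \<in> D" shows "quad f (x - y) = quad f (y - x)"
  using quad_minus[of "x - y"] assms lin_subspace_diff[OF sesq_on_lin_subspace[OF S]] by simp

lemma sqrt_quad_diff_ge: assumes "x \<in> D" "y \<in> D"
  shows "\<bar>sqrt (quad f x) - sqrt (quad f y)\<bar> \<le> sqrt (quad f (x - y))"
proof -
  have d: "x - y \<in> D" "y - x \<in> D" using assms lin_subspace_diff[OF sesq_on_lin_subspace[OF S]]
    by auto
  have "sqrt (quad f x) \<le> sqrt (quad f (x - y)) + sqrt (quad f y)"
    using sqrt_quad_add_le[OF d(1) assms(2)] by simp
  moreover have "sqrt (quad f y) \<le> sqrt (quad f (x - y)) + sqrt (quad f x)"
    using sqrt_quad_add_le[OF d(2) assms(1)] quad_diff_commute[OF assms] by simp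
  ultimately show ?thesis unfolding abs_le_iff by linarith
qed

lemma sqrt_quad_sum_le: assumes "\<And>k. k \<in> A \<Longrightarrow> x k \<in> D"
  shows "sqrt (quad f (sum x A)) \<le> (\<Sum>k\<in>A. sqrt (quad f (x k)))"
  using assms
proof (induction A rule: infinite_finite_induct)
  case (infinite A) thus ?case by (simp add: quad_zero)
next
  case empty thus ?case by (simp add: quad_zero)
next
  case (insert a A)
  have "sum x A \<in> D" using insert lin_subspace_sum[OF sesq_on_lin_subspace[OF S]] by blast
  hence "sqrt (quad f (x a + sum x A)) \<le> sqrt (quad f (x a)) + sqrt (quad f (sum x A))"
    using sqrt_quad_add_le insert by blast
  thus ?case using insert by simp
qed

end

lemma hnorm_qf: "hnorm x = sqrt (quad cinner x)"
  by (simp add: hnorm_def quad_def)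

lemma hnorm_nonneg: "0 \<le> hnorm x" by (simp add: hnorm_def cinner_nonneg)

lemma hnorm_add_le: "hnorm (x + y) \<le> hnorm x + hnorm (y::'a::complex_inner)"
  unfolding hnorm_qf using sqrt_quad_add_le[OF sesq_on_cinner pos_on_cinner] by simp

lemma hnorm_diff_le: "hnorm (x - y) \<le> hnorm x + hnorm (y::'a::complex_inner)"
  unfolding hnorm_qf using sqrt_quad_diff_le[OF sesq_on_cinner pos_on_cinner] by simp

lemma hnorm_scaleC: "hnorm (scaleC c x) = cmod c * hnorm (x::'a::complex_inner)"
  unfolding hnorm_qf using quad_scaleC[OF sesq_on_cinner pos_on_cinner UNIV_I, where c=c and x=x]
    by (simp add: real_sqrt_mult)

lemma hnorm_minus: "hnorm (- x) = hnorm (x::'a::complex_inner)"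
  unfolding hnorm_qf using quad_minus[OF sesq_on_cinner pos_on_cinner] by simp

lemma hnorm_diff_commute: "hnorm (x - y) = hnorm (y - (x::'a::complex_inner))"
  by (metis hnorm_minus minus_diff_eq)

lemma hnorm_zero [simp]: "hnorm (0::'a::complex_inner) = 0"
  unfolding hnorm_qf using quad_zero[OF sesq_on_cinner pos_on_cinner] by simp

lemma hnorm_eq_0: "hnorm (x::'a::complex_inner) = 0 \<longleftrightarrow> x = 0"
proof
  assume "hnorm x = 0"
  hence "Re (cinner x x) = 0" using cinner_nonneg[of x] by (simp add: hnorm_def)
  hence "cinner x x = 0" using Im_cinner_self[of x] by (simp add: complex_eq_iff)
  thus "x = 0" by (rule cinner_eq_zero)
qed simp

lemma hnorm_power2: "(hnorm x)^2 = quad cinner (x::'a::complex_inner)"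
  unfolding hnorm_qf using cinner_nonneg[of x] by (simp add: quad_def)

lemma hnorm_sum_le: "hnorm (sum x A) \<le> (\<Sum>k\<in>A. hnorm (x k :: 'a::complex_inner))"
  unfolding hnorm_qf using sqrt_quad_sum_le[OF sesq_on_cinner pos_on_cinner] by simp

lemma hnorm_diff_triangle: "hnorm (x - z) \<le> hnorm (x - y) + hnorm (y - (z::'a::complex_inner))"
  using hnorm_add_le[of "x - y" "y - z"] by simp

section \<open>The Jordan-von Neumann theorem\<close>

lemma scaleC_half_add_half: "scaleC (1/2) a + scaleC (1/2) a = (a::'a::complex_inner)"
  using scaleC_add_left[of "1/2" "1/2" a] by (simp add: scaleC_one)

lemma add_self_eq_scaleC_2: "a + a = scaleC 2 (a::'a::complex_inner)"
  using scaleC_add_left[of 1 1 a] by (simp add: scaleC_one)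

lemma scaleC_Re_Im: "scaleC c (x::'a::complex_inner) =
   scaleC (complex_of_real (Re c)) x + scaleC \<i> (scaleC (complex_of_real (Im c)) x)"
proof -
  have "c = complex_of_real (Re c) + \<i> * complex_of_real (Im c)" by (simp add: complex_eq_iff)
  hence "scaleC c x = scaleC (complex_of_real (Re c) + \<i> * complex_of_real (Im c)) x" by simp
  thus ?thesis by (simp add: scaleC_add_left scaleC_scaleC)
qed

lemma additive_fun_scale_nat:
  fixes phi :: "real \<Rightarrow> real"
  assumes add: "\<And>a b. phi (a + b) = phi a + phi b"
  shows "phi (real n * a) = real n * phi a"
proof (induction n)
  case 0
  show ?case using add[of 0 0] by simp
next
  case (Suc n)
  have "phi (real (Suc n) * a) = phi a + phi (real n * a)"
    using add[of a "real n * a"] by (simp add: algebra_simps)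
  thus ?case using Suc.IH by (simp add: algebra_simps)
qed

text \<open>Replaces continuity in the proof that the polarized form is real-homogeneous.\<close>

lemma additive_bounded_zero:
  fixes phi :: "real \<Rightarrow> real"
  assumes add: "\<And>a b. phi (a + b) = phi a + phi b" and one: "phi 1 = 0"
    and bnd: "\<And>a. 0 \<le> a \<Longrightarrow> a \<le> 1 \<Longrightarrow> \<bar>phi a\<bar> \<le> M"
  shows "phi r = 0"
proof -
  have nat: "phi (real n) = 0" for n
    using additive_fun_scale_nat[OF add, of n 1] one by simp
  have neg: "phi (- a) = - phi a" for a
    using add[of a "-a"] add[of 0 0] by simp
  have int: "phi (of_int k) = 0" for k
    using nat[of "nat k"] nat[of "nat (- k)"] neg[of "of_int k"]
    by (cases "k \<ge> 0") (simp_all add: of_nat_nat)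
  have bounded: "\<bar>phi a\<bar> \<le> M" for a
  proof -
    have "phi a = phi (a - of_int \<lfloor>a\<rfloor>)"
      using add[of "a - of_int \<lfloor>a\<rfloor>" "of_int \<lfloor>a\<rfloor>"] int by simp
    moreover have "0 \<le> a - of_int \<lfloor>a\<rfloor>" "a - of_int \<lfloor>a\<rfloor> \<le> 1"
      by linarith+
    ultimately show ?thesis using bnd by simp
  qed
  show "phi r = 0"
  proof (rule ccontr)
    assume ne: "phi r \<noteq> 0"
    obtain n :: nat where n: "M / \<bar>phi r\<bar> < real n" using reals_Archimedean2 by blast
    have "real n * \<bar>phi r\<bar> = \<bar>phi (real n * r)\<bar>"
      using additive_fun_scale_nat[OF add, of n r] by (simp add: abs_mult)
    also have "\<dots> \<le> M" by (rule bounded)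
    finally show False using n ne by (simp add: divide_less_eq)
  qed
qed

context
  fixes D and q :: "'a::complex_inner \<Rightarrow> real"
  assumes subspace: "lin_subspace D"
    and nonneg: "\<forall>x\<in>D. 0 \<le> q x"
    and parallelogram: "\<forall>x\<in>D. \<forall>y\<in>D. q (x + y) + q (x - y) = 2 * q x + 2 * q y"
    and homogeneous: "\<forall>x\<in>D. \<forall>c. q (scaleC c x) = (cmod c)^2 * q x"
begin

definition polar_re :: "'a \<Rightarrow> 'a \<Rightarrow> real" where
  "polar_re x y = (q (x + y) - q (x - y)) / 4"

definition polar_form :: "'a \<Rightarrow> 'a \<Rightarrow> complex" where
  "polar_form x y = complex_of_real (polar_re x y) + \<i> * complex_of_real (polar_re x (scaleC \<i> y))"

lemma parallelogram_quad_zero: "q 0 = 0"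
  using homogeneous lin_subspace_zero[OF subspace]
    by (metis scaleC_zero_left norm_zero mult_zero_left zero_power2)

lemma parallelogram_quad_minus: "x \<in> D \<Longrightarrow> q (- x) = q x"
  using homogeneous by (metis scaleC_minus_one norm_minus_cancel norm_one power_one mult_1)

lemma polar_re_commute: "x \<in> D \<Longrightarrow> y \<in> D \<Longrightarrow> polar_re x y = polar_re y x"
  unfolding polar_re_def
    by (metis add.commute minus_diff_eq parallelogram_quad_minus lin_subspace_diff[OF subspace])

lemma polar_re_minus_left: "x \<in> D \<Longrightarrow> y \<in> D \<Longrightarrow> polar_re (- x) y = - polar_re x y"
proof -
  assume a: "x \<in> D" "y \<in> D"
  have "q (- x + y) = q (x - y)"
    using parallelogram_quad_minus[of "x - y"] a lin_subspace_diff[OF subspace] by simp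
  moreover have "q (- x - y) = q (x + y)"
    using parallelogram_quad_minus[of "x + y"] a lin_subspace_add[OF subspace]
      by (simp add: algebra_simps)
  ultimately show ?thesis unfolding polar_re_def by (simp add: field_simps)
qed

lemma polar_re_midpoint: assumes "x \<in> D" "x' \<in> D" "y \<in> D"
  shows "polar_re x y + polar_re x' y = 2 * polar_re (scaleC (1/2) (x + x')) y"
proof -
  define h where "h = scaleC (1/2) (x + x')"
  define k where "k = scaleC (1/2) (x - x')"
  have hD: "h \<in> D" "k \<in> D" unfolding h_def k_def
    using assms subspace lin_subspace_add lin_subspace_diff lin_subspace_scaleC by blast+
  have hk1: "h + k = x"
  proof -
    have "h + k = scaleC (1/2) ((x + x') + (x - x'))" unfolding h_def k_def
      by (simp only: scaleC_add_right)
    also have "\<dots> = scaleC (1/2) (x + x)" by (rule arg_cong[where f="scaleC (1/2)"]) simp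
    also have "\<dots> = x" by (simp only: scaleC_add_right scaleC_half_add_half)
    finally show ?thesis .
  qed
  have hk2: "h - k = x'"
  proof -
    have "h - k = scaleC (1/2) ((x + x') - (x - x'))" unfolding h_def k_def
      by (simp only: scaleC_diff_right)
    also have "\<dots> = scaleC (1/2) (x' + x')" by (rule arg_cong[where f="scaleC (1/2)"]) simp
    also have "\<dots> = x'" by (simp only: scaleC_add_right scaleC_half_add_half)
    finally show ?thesis .
  qed
  have e1: "q (h + y + k) + q (h + y - k) = 2 * q (h + y) + 2 * q k"
    using parallelogram hD assms lin_subspace_add[OF subspace] by blast
  have e2: "q (h - y + k) + q (h - y - k) = 2 * q (h - y) + 2 * q k"
    using parallelogram hD assms lin_subspace_diff[OF subspace] by blast
  have eq: "h + y + k = x + y" "h + y - k = x' + y" "h - y + k = x - y" "h - y - k = x' - y"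
    using hk1 hk2 by (simp_all add: algebra_simps)
  have f1: "q (x + y) + q (x' + y) = 2 * q (h + y) + 2 * q k" using e1 unfolding eq .
  have f2: "q (x - y) + q (x' - y) = 2 * q (h - y) + 2 * q k" using e2 unfolding eq .
  have "(q (x + y) - q (x - y)) + (q (x' + y) - q (x' - y)) = 2 * (q (h + y) - q (h - y))" using f1 f2
    by argo
  thus ?thesis unfolding polar_re_def h_def[symmetric] by (simp add: field_simps)
qed

lemma polar_re_zero_left: "y \<in> D \<Longrightarrow> polar_re 0 y = 0"
  unfolding polar_re_def using parallelogram_quad_minus by simp

lemma polar_re_add_left: assumes "x \<in> D" "x' \<in> D" "y \<in> D"
  shows "polar_re (x + x') y = polar_re x y + polar_re x' y"
proof -
  have xx: "x + x' \<in> D" using assms lin_subspace_add[OF subspace] by blast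
  have "polar_re (x + x') y + polar_re 0 y = 2 * polar_re (scaleC (1/2) (x + x' + 0)) y"
    using polar_re_midpoint[OF xx lin_subspace_zero[OF subspace] assms(3)] .
  hence "polar_re (x + x') y = 2 * polar_re (scaleC (1/2) (x + x')) y" using polar_re_zero_left assms
    by simp
  thus ?thesis using polar_re_midpoint[OF assms] by simp
qed

lemma polar_re_add_right: assumes "x \<in> D" "y \<in> D" "y' \<in> D"
  shows "polar_re x (y + y') = polar_re x y + polar_re x y'"
  using polar_re_add_left[OF assms(2,3,1)] polar_re_commute assms lin_subspace_add[OF subspace] by metis

abbreviation scaleCR :: "real \<Rightarrow> 'a \<Rightarrow> 'a" where
  "scaleCR r x \<equiv> scaleC (complex_of_real r) x"

lemma scaleCR_add: "scaleCR (a + b) x = scaleCR a x + scaleCR b x" by (simp add: scaleC_add_left)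

lemma polar_re_bound: assumes "x \<in> D" "y \<in> D" "\<bar>a\<bar> \<le> 1"
  shows "\<bar>polar_re (scaleCR a x) y\<bar> \<le> (q x + q y) / 2"
proof -
  have ax: "scaleCR a x \<in> D" using assms lin_subspace_scaleC[OF subspace] by blast
  have p: "q (scaleCR a x + y) + q (scaleCR a x - y) = 2 * q (scaleCR a x) + 2 * q y"
    using parallelogram ax assms by blast
  have qa: "q (scaleCR a x) = a^2 * q x" using homogeneous assms by simp
  have "a^2 \<le> 1" using assms(3) by (simp add: abs_square_le_1)
  hence "a^2 * q x \<le> q x" using nonneg assms by (simp add: mult_left_le_one_le)
  moreover have "0 \<le> q (scaleCR a x + y)" "0 \<le> q (scaleCR a x - y)"
    using nonneg ax assms lin_subspace_add[OF subspace] lin_subspace_diff[OF subspace] by blast+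
  ultimately show ?thesis unfolding polar_re_def using p qa by (simp add: abs_le_iff)
qed

lemma polar_re_scaleCR_left: assumes x: "x \<in> D" and y: "y \<in> D"
  shows "polar_re (scaleCR r x) y = r * polar_re x y"
proof -
  define phi where "phi a = polar_re (scaleCR a x) y - a * polar_re x y" for a
  have srD: "\<And>a. scaleCR a x \<in> D" using x lin_subspace_scaleC[OF subspace] by blast
  have add: "phi (a + b) = phi a + phi b" for a b
    unfolding phi_def scaleCR_add using polar_re_add_left[OF srD srD y] by (simp add: algebra_simps)
  have one: "phi 1 = 0" by (simp add: phi_def scaleC_one)
  define M where "M = (q x + q y) / 2 + \<bar>polar_re x y\<bar>"
  have bnd: "\<bar>phi a\<bar> \<le> M" if "0 \<le> a" "a \<le> 1" for a
  proof -
    have "\<bar>polar_re (scaleCR a x) y\<bar> \<le> (q x + q y) / 2" using polar_re_bound x y that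
      by simp
    moreover have "\<bar>a * polar_re x y\<bar> \<le> \<bar>polar_re x y\<bar>" using that
      by (simp add: abs_mult mult_left_le_one_le)
    ultimately show ?thesis unfolding phi_def M_def by linarith
  qed
  have "phi r = 0" by (rule additive_bounded_zero[OF add one bnd])
  thus ?thesis unfolding phi_def by simp
qed

lemma polar_re_scaleCR_right: "x \<in> D \<Longrightarrow> y \<in> D \<Longrightarrow> polar_re x (scaleCR r y) = r * polar_re x y"
  using polar_re_scaleCR_left polar_re_commute lin_subspace_scaleC[OF subspace] by metis

lemma polar_re_i_i: assumes "x \<in> D" "y \<in> D"
  shows "polar_re (scaleC \<i> x) (scaleC \<i> y) = polar_re x y"
proof -
  have "q (scaleC \<i> x + scaleC \<i> y) = q (x + y)"
    using homogeneous assms lin_subspace_add[OF subspace] by (simp add: scaleC_add_right[symmetric])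
  moreover have "q (scaleC \<i> x - scaleC \<i> y) = q (x - y)"
    using homogeneous assms lin_subspace_diff[OF subspace] by (simp add: scaleC_diff_right[symmetric])
  ultimately show ?thesis unfolding polar_re_def by simp
qed

lemma polar_re_i_left: assumes "x \<in> D" "y \<in> D"
  shows "polar_re (scaleC \<i> x) y = - polar_re x (scaleC \<i> y)"
proof -
  have ix: "scaleC \<i> x \<in> D" using assms lin_subspace_scaleC[OF subspace] by blast
  have "polar_re (scaleC \<i> x) y = polar_re (scaleC \<i> (scaleC \<i> x)) (scaleC \<i> y)"
    using polar_re_i_i[OF ix assms(2)] by simp
  also have "scaleC \<i> (scaleC \<i> x) = - x" by (simp add: scaleC_scaleC scaleC_minus_one)
  finally show ?thesis using polar_re_minus_left assms lin_subspace_scaleC[OF subspace] by simp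
qed

lemma polar_form_add_left: "x \<in> D \<Longrightarrow> x' \<in> D \<Longrightarrow> y \<in> D \<Longrightarrow> polar_form (x + x') y = polar_form x y + polar_form x' y"
  unfolding polar_form_def using polar_re_add_left lin_subspace_scaleC[OF subspace]
    by (simp add: algebra_simps)

lemma polar_form_add_right: "x \<in> D \<Longrightarrow> y \<in> D \<Longrightarrow> y' \<in> D \<Longrightarrow> polar_form x (y + y') = polar_form x y + polar_form x y'"
  unfolding polar_form_def using polar_re_add_right lin_subspace_scaleC[OF subspace]
    by (simp add: algebra_simps scaleC_add_right)

lemma polar_form_scaleCR_left: "x \<in> D \<Longrightarrow> y \<in> D \<Longrightarrow> polar_form (scaleCR r x) y = complex_of_real r * polar_form x y"
  unfolding polar_form_def using polar_re_scaleCR_left lin_subspace_scaleC[OF subspace]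
    by (simp add: algebra_simps)

lemma polar_form_scaleCR_right: "x \<in> D \<Longrightarrow> y \<in> D \<Longrightarrow> polar_form x (scaleCR r y) = complex_of_real r * polar_form x y"
proof -
  assume a: "x \<in> D" "y \<in> D"
  have "scaleC \<i> (scaleCR r y) = scaleCR r (scaleC \<i> y)" by (simp add: scaleC_scaleC mult.commute)
  thus ?thesis unfolding polar_form_def using polar_re_scaleCR_right a lin_subspace_scaleC[OF subspace]
    by (simp add: algebra_simps)
qed

lemma polar_form_i_left: assumes "x \<in> D" "y \<in> D" shows "polar_form (scaleC \<i> x) y = \<i> * polar_form x y"
proof -
  have "polar_form (scaleC \<i> x) y = complex_of_real (- polar_re x (scaleC \<i> y)) + \<i> * complex_of_real (polar_re x y)"
    unfolding polar_form_def using polar_re_i_left[OF assms] polar_re_i_i[OF assms] by simp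
  thus ?thesis unfolding polar_form_def by (simp add: algebra_simps)
qed

lemma polar_form_i_right: assumes "x \<in> D" "y \<in> D" shows "polar_form x (scaleC \<i> y) = - \<i> * polar_form x y"
proof -
  have iy: "scaleC \<i> y \<in> D" using assms lin_subspace_scaleC[OF subspace] by blast
  have "scaleC \<i> (scaleC \<i> y) = - y" by (simp add: scaleC_scaleC scaleC_minus_one)
  hence "polar_re x (scaleC \<i> (scaleC \<i> y)) = - polar_re x y"
    using polar_re_minus_left polar_re_commute assms lin_subspace_minus[OF subspace] by metis
  hence "polar_form x (scaleC \<i> y) = complex_of_real (polar_re x (scaleC \<i> y)) - \<i> * complex_of_real (polar_re x y)"
    unfolding polar_form_def by simp
  thus ?thesis unfolding polar_form_def by (simp add: algebra_simps)
qed

lemma polar_form_scaleC_left: assumes "x \<in> D" "y \<in> D" shows "polar_form (scaleC c x) y = c * polar_form x y"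
proof -
  have d: "scaleCR (Re c) x \<in> D" "scaleCR (Im c) x \<in> D"
    using assms lin_subspace_scaleC[OF subspace] by blast+
  have "polar_form (scaleC c x) y = polar_form (scaleCR (Re c) x) y + polar_form (scaleC \<i> (scaleCR (Im c) x)) y"
    using scaleC_Re_Im[of c x] polar_form_add_left d assms lin_subspace_scaleC[OF subspace] by metis
  also have "\<dots> = complex_of_real (Re c) * polar_form x y + \<i> * (complex_of_real (Im c) * polar_form x y)"
    using polar_form_scaleCR_left polar_form_i_left d assms by simp
  also have "\<dots> = c * polar_form x y" by (simp add: algebra_simps complex_eq_iff)
  finally show ?thesis .
qed

lemma polar_form_scaleC_right: assumes "x \<in> D" "y \<in> D" shows "polar_form x (scaleC c y) = cnj c * polar_form x y"
proof -
  have d: "scaleCR (Re c) y \<in> D" "scaleCR (Im c) y \<in> D"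
    using assms lin_subspace_scaleC[OF subspace] by blast+
  have "polar_form x (scaleC c y) = polar_form x (scaleCR (Re c) y) + polar_form x (scaleC \<i> (scaleCR (Im c) y))"
    using scaleC_Re_Im[of c y] polar_form_add_right d assms lin_subspace_scaleC[OF subspace] by metis
  also have "\<dots> = complex_of_real (Re c) * polar_form x y - \<i> * (complex_of_real (Im c) * polar_form x y)"
    using polar_form_scaleCR_right polar_form_i_right d assms by simp
  also have "\<dots> = cnj c * polar_form x y" by (simp add: algebra_simps complex_eq_iff)
  finally show ?thesis .
qed

lemma polar_form_diag: assumes "x \<in> D" shows "polar_form x x = complex_of_real (q x)"
proof -
  have "polar_re x x = q x"
  proof -
    have "q (x + x) = 4 * q x" using homogeneous assms by (simp add: add_self_eq_scaleC_2)
    thus ?thesis unfolding polar_re_def using parallelogram_quad_zero by simp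
  qed
  moreover have "polar_re x (scaleC \<i> x) = 0"
  proof -
    have "x + scaleC \<i> x = scaleC (1 + \<i>) x" by (simp add: scaleC_add_left scaleC_one)
    moreover have "x - scaleC \<i> x = scaleC (1 - \<i>) x" by (simp add: scaleC_diff_left scaleC_one)
    moreover have "cmod (1 + \<i>) = cmod (1 - \<i>)" by (simp add: cmod_def)
    ultimately show ?thesis unfolding polar_re_def using homogeneous assms by simp
  qed
  ultimately show ?thesis unfolding polar_form_def by simp
qed

lemma sesq_on_polar_form: "sesq_on D polar_form \<and> (\<forall>x\<in>D. polar_form x x = complex_of_real (q x))"
  unfolding sesq_on_def
    using subspace polar_form_add_left polar_form_add_right polar_form_scaleC_left polar_form_scaleC_right polar_form_diag
      by blast

end

lemma parallelogram_law_imp_sesq_form: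
  fixes D and q :: "'a::complex_inner \<Rightarrow> real"
  assumes "lin_subspace D" "\<forall>x\<in>D. 0 \<le> q x"
    "\<forall>x\<in>D. \<forall>y\<in>D. q (x + y) + q (x - y) = 2 * q x + 2 * q y"
    "\<forall>x\<in>D. \<forall>c. q (scaleC c x) = (cmod c)^2 * q x"
  shows "\<exists>B. sesq_on D B \<and> (\<forall>x\<in>D. B x x = complex_of_real (q x))"
  using sesq_on_polar_form[OF assms] by blast

section \<open>The lower semicontinuous envelope of a positive form\<close>

text \<open>The class \<open>complex_inner\<close> is not an instance of the library's metric spaces, so convergence
  in H is spelled out via \<open>hnorm\<close>. In \<open>lim_quad\<close>, \<open>lim\<close> is junk unless the limit exists, which
  it does for t-Cauchy sequences (\<open>form_Cauchy_quad_tendsto\<close>).\<close>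

definition form_Cauchy :: "'a::complex_inner sform \<Rightarrow> (nat \<Rightarrow> 'a) \<Rightarrow> bool" where
  "form_Cauchy t z \<longleftrightarrow> (\<forall>n. z n \<in> fdom t) \<and> (\<forall>e>0. \<exists>N. \<forall>m\<ge>N. \<forall>n\<ge>N. quad (fval t) (z m - z n) < e)"

definition hconverges :: "(nat \<Rightarrow> 'a::complex_inner) \<Rightarrow> 'a \<Rightarrow> bool" where
  "hconverges z x \<longleftrightarrow> (\<lambda>n. hnorm (z n - x)) \<longlonglongrightarrow> 0"

definition approximates :: "'a::complex_inner sform \<Rightarrow> 'a \<Rightarrow> (nat \<Rightarrow> 'a) \<Rightarrow> bool" where
  "approximates t x z \<longleftrightarrow> form_Cauchy t z \<and> hconverges z x"

definition lim_quad :: "'a::complex_inner sform \<Rightarrow> (nat \<Rightarrow> 'a) \<Rightarrow> real" where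
  "lim_quad t z = lim (\<lambda>n. quad (fval t) (z n))"

definition lsc_dom :: "'a::complex_inner sform \<Rightarrow> 'a set" where
  "lsc_dom t = {x. \<exists>z. approximates t x z}"

definition lsc_quad :: "'a::complex_inner sform \<Rightarrow> 'a \<Rightarrow> real" where
  "lsc_quad t x = Inf {lim_quad t z | z. approximates t x z}"

lemma abs_hnorm [simp]: "\<bar>hnorm x\<bar> = hnorm x"
  by (simp add: hnorm_nonneg)

lemma hconverges_iff: "hconverges z x \<longleftrightarrow> (\<forall>e>0. \<exists>N. \<forall>n\<ge>N. hnorm (z n - x) < e)"
  unfolding hconverges_def lim_sequentially using hnorm_nonneg by simp

lemma hconverges_const: "hconverges (\<lambda>n. x) x"
  by (simp add: hconverges_def)

lemma hconverges_add: "hconverges z x \<Longrightarrow> hconverges w y \<Longrightarrow> hconverges (\<lambda>n. z n + w n) (x + y)"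
proof -
  assume a: "hconverges z x" "hconverges w y"
  have lim: "(\<lambda>n. hnorm (z n - x) + hnorm (w n - y)) \<longlonglongrightarrow> 0"
    using a tendsto_add[of _ 0 _ _ 0] unfolding hconverges_def by fastforce
  have le: "\<And>n. hnorm ((z n + w n) - (x + y)) \<le> hnorm (z n - x) + hnorm (w n - y)"
    using hnorm_add_le by (metis add_diff_add)
  show ?thesis unfolding hconverges_def
    by (rule real_tendsto_sandwich[of "\<lambda>n. 0" _ sequentially "\<lambda>n. hnorm (z n - x) + hnorm (w n - y)"])
      (use le lim hnorm_nonneg in \<open>auto intro: always_eventually\<close>)
qed

lemma hconverges_scaleC: "hconverges z x \<Longrightarrow> hconverges (\<lambda>n. scaleC c (z n)) (scaleC c x)"
proof -
  assume a: "hconverges z x"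
  have "(\<lambda>n. cmod c * hnorm (z n - x)) \<longlonglongrightarrow> cmod c * 0"
    using a unfolding hconverges_def by (intro tendsto_mult tendsto_const)
  thus ?thesis unfolding hconverges_def by (simp add: scaleC_diff_right[symmetric] hnorm_scaleC)
qed

lemma hconverges_minus: "hconverges z x \<Longrightarrow> hconverges (\<lambda>n. - z n) (- x)"
  using hconverges_scaleC[of z x "-1"] by (simp add: scaleC_minus_one)

lemma hconverges_diff: "hconverges z x \<Longrightarrow> hconverges w y \<Longrightarrow> hconverges (\<lambda>n. z n - w n) (x - y)"
proof -
  assume a: "hconverges z x" "hconverges w y"
  have "hconverges (\<lambda>n. z n + - w n) (x + - y)"
    by (rule hconverges_add[OF a(1) hconverges_minus[OF a(2)]])
  thus ?thesis by simp
qed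

lemma hconverges_unique: "hconverges z x \<Longrightarrow> hconverges z y \<Longrightarrow> x = y"
proof -
  assume a: "hconverges z x" "hconverges z y"
  have "(\<lambda>n. hnorm (z n - x) + hnorm (z n - y)) \<longlonglongrightarrow> 0"
    using a tendsto_add[of _ 0 _ _ 0] unfolding hconverges_def by fastforce
  moreover have "\<And>n. hnorm (x - y) \<le> hnorm (z n - x) + hnorm (z n - y)"
    using hnorm_diff_triangle hnorm_diff_commute by metis
  ultimately have "hnorm (x - y) \<le> 0"
    by (intro tendsto_lowerbound[OF _ _ trivial_limit_sequentially]) (auto intro: always_eventually)
  hence "hnorm (x - y) = 0" using hnorm_nonneg[of "x - y"] by simp
  thus ?thesis by (simp add: hnorm_eq_0)
qed

context
  fixes t :: "'a::complex_inner sform"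
  assumes S: "sesq_on (fdom t) (fval t)" and P: "pos_on (fdom t) (fval t)"
begin

lemma quad_add_le: assumes "x \<in> fdom t" "y \<in> fdom t" shows "quad (fval t) (x + y) \<le> 2 * quad (fval t) x + 2 * quad (fval t) y"
  using quad_parallelogram[OF S P assms] quad_nonneg[OF S P, of "x - y"] lin_subspace_diff[OF sesq_on_lin_subspace[OF S] assms]
    by linarith

lemma form_Cauchy_in_fdom: "form_Cauchy t z \<Longrightarrow> z n \<in> fdom t"
  by (simp add: form_Cauchy_def)

lemma form_Cauchy_quad_tendsto: assumes "form_Cauchy t z" shows "(\<lambda>n. quad (fval t) (z n)) \<longlonglongrightarrow> lim_quad t z"
proof -
  have zD: "\<And>n. z n \<in> fdom t" using assms form_Cauchy_in_fdom by blast
  have "Cauchy (\<lambda>n. sqrt (quad (fval t) (z n)))"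
  proof (rule CauchyI)
    fix e :: real assume e: "0 < e"
    then obtain N where N: "\<forall>m\<ge>N. \<forall>n\<ge>N. quad (fval t) (z m - z n) < e^2"
      using assms unfolding form_Cauchy_def by (meson zero_less_power)
    show "\<exists>M. \<forall>m\<ge>M. \<forall>n\<ge>M. norm (sqrt (quad (fval t) (z m)) - sqrt (quad (fval t) (z n))) < e"
    proof (intro exI allI impI)
      fix m n assume "N \<le> m" "N \<le> n"
      hence "quad (fval t) (z m - z n) < e^2" using N by blast
      hence "sqrt (quad (fval t) (z m - z n)) < e" using e
        by (metis real_sqrt_less_iff real_sqrt_abs abs_of_pos power2_eq_square real_sqrt_pow2_iff)
      thus "norm (sqrt (quad (fval t) (z m)) - sqrt (quad (fval t) (z n))) < e"
        using sqrt_quad_diff_ge[OF S P zD zD, of m n] by simp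
    qed
  qed
  hence "convergent (\<lambda>n. sqrt (quad (fval t) (z n)))" by (rule Cauchy_convergent)
  then obtain L where "(\<lambda>n. sqrt (quad (fval t) (z n))) \<longlonglongrightarrow> L"
    by (auto simp: convergent_def)
  hence "(\<lambda>n. (sqrt (quad (fval t) (z n)))^2) \<longlonglongrightarrow> L^2"
    by (intro tendsto_intros)
  hence "(\<lambda>n. quad (fval t) (z n)) \<longlonglongrightarrow> L^2" using quad_nonneg[OF S P] zD
    by simp
  thus ?thesis unfolding lim_quad_def by (metis limI)
qed

lemma lim_quad_nonneg: "form_Cauchy t z \<Longrightarrow> 0 \<le> lim_quad t z"
  by (rule LIMSEQ_le_const[OF form_Cauchy_quad_tendsto]) (auto intro: quad_nonneg[OF S P] form_Cauchy_in_fdom)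

lemma form_Cauchy_const: "x \<in> fdom t \<Longrightarrow> form_Cauchy t (\<lambda>n. x)"
  unfolding form_Cauchy_def using quad_zero[OF S P] by simp

lemma lim_quad_const: "x \<in> fdom t \<Longrightarrow> lim_quad t (\<lambda>n. x) = quad (fval t) x"
  unfolding lim_quad_def by simp

lemma form_Cauchy_add: assumes "form_Cauchy t z" "form_Cauchy t w" shows "form_Cauchy t (\<lambda>n. z n + w n)"
  unfolding form_Cauchy_def
proof (intro conjI allI impI)
  fix n show "z n + w n \<in> fdom t"
    using assms form_Cauchy_in_fdom lin_subspace_add[OF sesq_on_lin_subspace[OF S]] by blast
next
  fix e :: real assume e: "0 < e"
  obtain N1 where N1: "\<forall>m\<ge>N1. \<forall>n\<ge>N1. quad (fval t) (z m - z n) < e/4"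
    using assms(1) e unfolding form_Cauchy_def by (meson zero_less_divide_iff zero_less_numeral)
  obtain N2 where N2: "\<forall>m\<ge>N2. \<forall>n\<ge>N2. quad (fval t) (w m - w n) < e/4"
    using assms(2) e unfolding form_Cauchy_def by (meson zero_less_divide_iff zero_less_numeral)
  show "\<exists>N. \<forall>m\<ge>N. \<forall>n\<ge>N. quad (fval t) (z m + w m - (z n + w n)) < e"
  proof (intro exI allI impI)
    fix m n assume mn: "max N1 N2 \<le> m" "max N1 N2 \<le> n"
    have d: "z m - z n \<in> fdom t" "w m - w n \<in> fdom t"
      using assms form_Cauchy_in_fdom lin_subspace_diff[OF sesq_on_lin_subspace[OF S]] by blast+
    have eq: "z m + w m - (z n + w n) = (z m - z n) + (w m - w n)" by simp
    have "quad (fval t) (z m + w m - (z n + w n)) \<le> 2 * quad (fval t) (z m - z n) + 2 * quad (fval t) (w m - w n)"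
      using quad_add_le[OF d] by (simp only: eq)
    moreover have "quad (fval t) (z m - z n) < e/4" "quad (fval t) (w m - w n) < e/4" using N1 N2 mn
      by auto
    ultimately show "quad (fval t) (z m + w m - (z n + w n)) < e" by linarith
  qed
qed

lemma form_Cauchy_scaleC: assumes "form_Cauchy t z" shows "form_Cauchy t (\<lambda>n. scaleC c (z n))"
  unfolding form_Cauchy_def
proof (intro conjI allI impI)
  fix n show "scaleC c (z n) \<in> fdom t"
    using assms form_Cauchy_in_fdom lin_subspace_scaleC[OF sesq_on_lin_subspace[OF S]] by blast
next
  fix e :: real assume e: "0 < e"
  have cp: "0 < (cmod c)^2 + 1" using zero_le_power2[of "cmod c"] by linarith
  have p: "0 < e / ((cmod c)^2 + 1)" using e cp by simp
  obtain N where N: "\<forall>m\<ge>N. \<forall>n\<ge>N. quad (fval t) (z m - z n) < e / ((cmod c)^2 + 1)"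
    using assms p unfolding form_Cauchy_def by blast
  show "\<exists>N. \<forall>m\<ge>N. \<forall>n\<ge>N. quad (fval t) (scaleC c (z m) - scaleC c (z n)) < e"
  proof (intro exI allI impI)
    fix m n assume mn: "N \<le> m" "N \<le> n"
    have d: "z m - z n \<in> fdom t"
      using assms form_Cauchy_in_fdom lin_subspace_diff[OF sesq_on_lin_subspace[OF S]] by blast
    have "quad (fval t) (scaleC c (z m) - scaleC c (z n)) = (cmod c)^2 * quad (fval t) (z m - z n)"
      using quad_scaleC[OF S P d] by (simp add: scaleC_diff_right)
    also have "\<dots> \<le> ((cmod c)^2 + 1) * quad (fval t) (z m - z n)" using quad_nonneg[OF S P d]
      by (simp add: mult_right_mono)
    also have "\<dots> < ((cmod c)^2 + 1) * (e / ((cmod c)^2 + 1))"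
      using N mn cp by (intro mult_strict_left_mono) auto
    also have "\<dots> = e" using cp by simp
    finally show "quad (fval t) (scaleC c (z m) - scaleC c (z n)) < e" .
  qed
qed

lemma form_Cauchy_minus: "form_Cauchy t z \<Longrightarrow> form_Cauchy t (\<lambda>n. - z n)"
  using form_Cauchy_scaleC[of z "-1"] by (simp add: scaleC_minus_one)

lemma form_Cauchy_diff: "form_Cauchy t z \<Longrightarrow> form_Cauchy t w \<Longrightarrow> form_Cauchy t (\<lambda>n. z n - w n)"
proof -
  assume a: "form_Cauchy t z" "form_Cauchy t w"
  have "form_Cauchy t (\<lambda>n. z n + - w n)"
    by (rule form_Cauchy_add[OF a(1) form_Cauchy_minus[OF a(2)]])
  thus ?thesis by simp
qed

lemma lim_quad_scaleC: assumes "form_Cauchy t z" shows "lim_quad t (\<lambda>n. scaleC c (z n)) = (cmod c)^2 * lim_quad t z"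
proof -
  have a: "(\<lambda>n. quad (fval t) (scaleC c (z n))) \<longlonglongrightarrow> lim_quad t (\<lambda>n. scaleC c (z n))"
    using form_Cauchy_quad_tendsto form_Cauchy_scaleC assms by blast
  have b: "(\<lambda>n. quad (fval t) (scaleC c (z n))) = (\<lambda>n. (cmod c)^2 * quad (fval t) (z n))"
    using quad_scaleC[OF S P] form_Cauchy_in_fdom[OF assms] by auto
  have c: "(\<lambda>n. (cmod c)^2 * quad (fval t) (z n)) \<longlonglongrightarrow> (cmod c)^2 * lim_quad t z"
    using form_Cauchy_quad_tendsto[OF assms] by (intro tendsto_intros)
  from a[unfolded b] c show ?thesis by (rule LIMSEQ_unique)
qed

lemma lim_quad_parallelogram: assumes "form_Cauchy t z" "form_Cauchy t w"
  shows "lim_quad t (\<lambda>n. z n + w n) + lim_quad t (\<lambda>n. z n - w n) = 2 * lim_quad t z + 2 * lim_quad t w"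
proof -
  have a: "(\<lambda>n. quad (fval t) (z n + w n) + quad (fval t) (z n - w n)) \<longlonglongrightarrow> lim_quad t (\<lambda>n. z n + w n) + lim_quad t (\<lambda>n. z n - w n)"
    using form_Cauchy_quad_tendsto form_Cauchy_add form_Cauchy_diff assms by (intro tendsto_add) blast+
  have b: "(\<lambda>n. quad (fval t) (z n + w n) + quad (fval t) (z n - w n)) = (\<lambda>n. 2 * quad (fval t) (z n) + 2 * quad (fval t) (w n))"
    using quad_parallelogram[OF S P] form_Cauchy_in_fdom assms by blast
  have c: "(\<lambda>n. 2 * quad (fval t) (z n) + 2 * quad (fval t) (w n)) \<longlonglongrightarrow> 2 * lim_quad t z + 2 * lim_quad t w"
    using form_Cauchy_quad_tendsto assms by (intro tendsto_intros) auto
  from a[unfolded b] c show ?thesis by (rule LIMSEQ_unique)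
qed

lemma approximates_const: "x \<in> fdom t \<Longrightarrow> approximates t x (\<lambda>n. x)"
  by (simp add: approximates_def form_Cauchy_const hconverges_const)
lemma approximates_add: "approximates t x z \<Longrightarrow> approximates t y w \<Longrightarrow> approximates t (x + y) (\<lambda>n. z n + w n)"
  by (simp add: approximates_def form_Cauchy_add hconverges_add)
lemma approximates_diff: "approximates t x z \<Longrightarrow> approximates t y w \<Longrightarrow> approximates t (x - y) (\<lambda>n. z n - w n)"
  by (simp add: approximates_def form_Cauchy_diff hconverges_diff)
lemma approximates_scaleC: "approximates t x z \<Longrightarrow> approximates t (scaleC c x) (\<lambda>n. scaleC c (z n))"
  by (simp add: approximates_def form_Cauchy_scaleC hconverges_scaleC)

lemma fdom_in_lsc_dom: "x \<in> fdom t \<Longrightarrow> x \<in> lsc_dom t"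
  unfolding lsc_dom_def using approximates_const by blast

lemma lin_subspace_lsc_dom: "lin_subspace (lsc_dom t)"
  unfolding lin_subspace_def lsc_dom_def
  using approximates_add approximates_scaleC approximates_const lin_subspace_zero[OF sesq_on_lin_subspace[OF S]]
    by blast

lemma lsc_quad_bdd_below: "bdd_below {lim_quad t z | z. approximates t x z}"
  by (rule bdd_belowI[of _ 0]) (auto simp: approximates_def lim_quad_nonneg)

lemma lsc_quad_le: "approximates t x z \<Longrightarrow> lsc_quad t x \<le> lim_quad t z"
  unfolding lsc_quad_def by (rule cInf_lower[OF _ lsc_quad_bdd_below]) blast

lemma lsc_quad_nonneg: "x \<in> lsc_dom t \<Longrightarrow> 0 \<le> lsc_quad t x"
  unfolding lsc_quad_def lsc_dom_def
    by (rule cInf_greatest) (auto simp: approximates_def lim_quad_nonneg)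

lemma lsc_quad_approx: assumes "x \<in> lsc_dom t" "0 < e" shows "\<exists>z. approximates t x z \<and> lim_quad t z < lsc_quad t x + e"
proof -
  have ne: "{lim_quad t z | z. approximates t x z} \<noteq> {}" using assms unfolding lsc_dom_def
    by blast
  have "lsc_quad t x < lsc_quad t x + e" using assms by simp
  then obtain v where "v \<in> {lim_quad t z | z. approximates t x z}" "v < lsc_quad t x + e"
    using cInf_less_iff[OF ne lsc_quad_bdd_below] unfolding lsc_quad_def by blast
  thus ?thesis by blast
qed

lemma lsc_quad_greatest: assumes "x \<in> lsc_dom t" "\<And>z. approximates t x z \<Longrightarrow> v \<le> lim_quad t z" shows "v \<le> lsc_quad t x"
  unfolding lsc_quad_def using assms unfolding lsc_dom_def by (intro cInf_greatest) auto

lemma lsc_quad_le_quad: "x \<in> fdom t \<Longrightarrow> lsc_quad t x \<le> quad (fval t) x"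
  using lsc_quad_le[OF approximates_const] lim_quad_const by metis

lemma lsc_quad_scaled_greatest: assumes "x \<in> lsc_dom t" "\<And>z. approximates t x z \<Longrightarrow> v \<le> c * lim_quad t z" "0 \<le> c"
  shows "v \<le> c * lsc_quad t x"
proof (rule field_le_epsilon)
  fix e :: real assume e: "0 < e"
  have "0 < e / (c + 1)" using e assms by simp
  then obtain z where z: "approximates t x z" "lim_quad t z < lsc_quad t x + e / (c + 1)"
    using lsc_quad_approx assms by blast
  have "v \<le> c * lim_quad t z" using assms z by blast
  also have "\<dots> \<le> c * (lsc_quad t x + e / (c + 1))" using z assms by (intro mult_left_mono) auto
  also have "\<dots> = c * lsc_quad t x + e * (c / (c + 1))" by (simp add: algebra_simps)
  also have "\<dots> \<le> c * lsc_quad t x + e"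
  proof -
    have "(c / (c + 1)) * e \<le> e" using e assms(3) by (intro mult_left_le_one_le) auto
    thus ?thesis by (simp add: mult.commute)
  qed
  finally show "v \<le> c * lsc_quad t x + e" .
qed

lemma lsc_quad_scaleC_le: assumes "x \<in> lsc_dom t" shows "lsc_quad t (scaleC c x) \<le> (cmod c)^2 * lsc_quad t x"
proof (rule lsc_quad_scaled_greatest[OF assms])
  fix z assume "approximates t x z"
  thus "lsc_quad t (scaleC c x) \<le> (cmod c)^2 * lim_quad t z"
    using lsc_quad_le[OF approximates_scaleC] lim_quad_scaleC approximates_def by metis
qed simp

lemma lsc_quad_scaleC: assumes "x \<in> lsc_dom t" shows "lsc_quad t (scaleC c x) = (cmod c)^2 * lsc_quad t x"
proof (cases "c = 0")
  case True
  have "lsc_quad t 0 \<le> 0"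
    using lsc_quad_le[OF approximates_const[OF lin_subspace_zero[OF sesq_on_lin_subspace[OF S]]]] lim_quad_const[OF lin_subspace_zero[OF sesq_on_lin_subspace[OF S]]]
    quad_zero[OF S P] by simp
  moreover have "0 \<le> lsc_quad t 0" using lsc_quad_nonneg lin_subspace_zero[OF lin_subspace_lsc_dom]
    by blast
  ultimately show ?thesis using True by simp
next
  case False
  have cx: "scaleC c x \<in> lsc_dom t" using assms lin_subspace_scaleC[OF lin_subspace_lsc_dom] by blast
  have "lsc_quad t x = lsc_quad t (scaleC (inverse c) (scaleC c x))" using False
    by (simp add: scaleC_scaleC scaleC_one)
  also have "\<dots> \<le> (cmod (inverse c))^2 * lsc_quad t (scaleC c x)"
    by (rule lsc_quad_scaleC_le[OF cx])
  finally have "(cmod c)^2 * lsc_quad t x \<le> (cmod c)^2 * ((cmod (inverse c))^2 * lsc_quad t (scaleC c x))"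
    by (simp add: mult_left_mono)
  also have "\<dots> = lsc_quad t (scaleC c x)"
  proof -
    have "(cmod c)^2 * (cmod (inverse c))^2 = 1" using False by (simp add: norm_inverse power_inverse)
    thus ?thesis by (metis mult.assoc mult_1)
  qed
  finally show ?thesis using lsc_quad_scaleC_le[OF assms, of c] by simp
qed

lemma lsc_quad_parallelogram_le: assumes "x \<in> lsc_dom t" "y \<in> lsc_dom t"
  shows "lsc_quad t (x + y) + lsc_quad t (x - y) \<le> 2 * lsc_quad t x + 2 * lsc_quad t y"
proof (rule field_le_epsilon)
  fix e :: real assume e: "0 < e"
  obtain z where z: "approximates t x z" "lim_quad t z < lsc_quad t x + e/4"
    using lsc_quad_approx assms e by (meson zero_less_divide_iff zero_less_numeral)
  obtain w where w: "approximates t y w" "lim_quad t w < lsc_quad t y + e/4"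
    using lsc_quad_approx assms e by (meson zero_less_divide_iff zero_less_numeral)
  have "lsc_quad t (x + y) + lsc_quad t (x - y) \<le> lim_quad t (\<lambda>n. z n + w n) + lim_quad t (\<lambda>n. z n - w n)"
    using lsc_quad_le[OF approximates_add[OF z(1) w(1)]] lsc_quad_le[OF approximates_diff[OF z(1) w(1)]]
      by simp
  also have "\<dots> = 2 * lim_quad t z + 2 * lim_quad t w"
    using lim_quad_parallelogram z w approximates_def by blast
  finally show "lsc_quad t (x + y) + lsc_quad t (x - y) \<le> 2 * lsc_quad t x + 2 * lsc_quad t y + e"
    using z w by linarith
qed

lemma lsc_quad_parallelogram: assumes "x \<in> lsc_dom t" "y \<in> lsc_dom t"
  shows "lsc_quad t (x + y) + lsc_quad t (x - y) = 2 * lsc_quad t x + 2 * lsc_quad t y"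
proof -
  have xy: "x + y \<in> lsc_dom t" "x - y \<in> lsc_dom t"
    using assms lin_subspace_add[OF lin_subspace_lsc_dom] lin_subspace_diff[OF lin_subspace_lsc_dom]
      by blast+
  have "lsc_quad t ((x + y) + (x - y)) + lsc_quad t ((x + y) - (x - y)) \<le> 2 * lsc_quad t (x + y) + 2 * lsc_quad t (x - y)"
    by (rule lsc_quad_parallelogram_le[OF xy])
  moreover have "(x + y) + (x - y) = scaleC 2 x" "(x + y) - (x - y) = scaleC 2 y"
    by (simp_all add: add_self_eq_scaleC_2[symmetric] algebra_simps)
  ultimately have "4 * lsc_quad t x + 4 * lsc_quad t y \<le> 2 * lsc_quad t (x + y) + 2 * lsc_quad t (x - y)"
    using lsc_quad_scaleC assms by simp
  thus ?thesis using lsc_quad_parallelogram_le[OF assms] by linarith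
qed

lemma ex_sesq_form_lsc_quad: "\<exists>B. sesq_on (lsc_dom t) B \<and> (\<forall>x\<in>lsc_dom t. B x x = complex_of_real (lsc_quad t x))"
  by (rule parallelogram_law_imp_sesq_form[OF lin_subspace_lsc_dom]) (auto simp: lsc_quad_nonneg lsc_quad_parallelogram lsc_quad_scaleC)

end

section \<open>The envelope is a closed form\<close>

lemma sum_half_power_greaterThanAtMost: "(\<Sum>k\<in>{j<..n}. (1/2::real)^k) = (if j \<le> n then (1/2)^j - (1/2)^n else 0)"
proof (induction n)
  case 0 thus ?case by simp
next
  case (Suc n)
  show ?case
  proof (cases "j \<le> n")
    case True
    hence "{j<..Suc n} = insert (Suc n) {j<..n}" by auto
    hence "(\<Sum>k\<in>{j<..Suc n}. (1/2::real)^k) = (1/2)^Suc n + (\<Sum>k\<in>{j<..n}. (1/2)^k)"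
      by simp
    thus ?thesis using Suc True by simp
  next
    case False
    hence "{j<..Suc n} = {}" by auto
    thus ?thesis using False by (cases "j = Suc n") auto
  qed
qed

lemma sum_half_power_greaterThanAtMost_le: "(\<Sum>k\<in>{j<..n}. (1/2::real)^k) \<le> (1/2)^j"
  by (simp add: sum_half_power_greaterThanAtMost)

lemma sum_half_power_atMost_le: "(\<Sum>k\<in>{..n}. (1/2::real)^k) \<le> 2"
proof -
  have "{..n} = insert 0 {0<..n}" by auto
  hence "(\<Sum>k\<in>{..n}. (1/2::real)^k) = 1 + (\<Sum>k\<in>{0<..n}. (1/2)^k)" by simp
  thus ?thesis using sum_half_power_greaterThanAtMost_le[of 0 n] by simp
qed

lemma sqrt_quarter_power: "sqrt ((1/4::real)^n) = (1/2)^n"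
proof -
  have "((1/2::real)^n)^2 = ((1/2)^2)^n" by (metis power_mult mult.commute)
  hence "(1/4::real)^n = ((1/2)^n)^2" by (simp add: power2_eq_square)
  thus ?thesis by simp
qed

lemma half_power_eventually_less: "0 < (e::real) \<Longrightarrow> \<exists>N. \<forall>n\<ge>N. (1/2::real)^n < e"
proof -
  assume e: "0 < e"
  obtain N where "(1/2::real)^N < e" using real_arch_pow_inv[OF e, of "1/2"] by auto
  moreover have "\<And>n. N \<le> n \<Longrightarrow> (1/2::real)^n \<le> (1/2)^N"
    by (simp add: power_decreasing)
  ultimately show ?thesis by (meson le_less_trans)
qed

lemma Cauchy_fast_subseq:
  fixes f :: "nat \<Rightarrow> nat \<Rightarrow> real"
  assumes "\<forall>e>0. \<exists>N. \<forall>a\<ge>N. \<forall>b\<ge>N. f a b < e" and "0 < r"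
  obtains nk where "\<And>k. k \<le> nk k" "\<And>k. nk k \<le> nk (Suc k)"
    "\<And>k a b. nk k \<le> a \<Longrightarrow> nk k \<le> b \<Longrightarrow> f a b < r^k"
proof -
  have "\<forall>k. \<exists>N. \<forall>a\<ge>N. \<forall>b\<ge>N. f a b < r^k" using assms by simp
  then obtain Nk where Nk: "\<And>k a b. Nk k \<le> a \<Longrightarrow> Nk k \<le> b \<Longrightarrow> f a b < r^k"
    by metis
  define nk where "nk k = k + (\<Sum>i\<le>k. Nk i)" for k
  have ge: "Nk k \<le> nk k" for k unfolding nk_def using member_le_sum[of k "{..k}" Nk] by auto
  show ?thesis
  proof (rule that)
    show "k \<le> nk k" "nk k \<le> nk (Suc k)" for k unfolding nk_def by auto
    show "f a b < r^k" if "nk k \<le> a" "nk k \<le> b" for k a b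
      using ge[of k] that by (intro Nk) linarith+
  qed
qed

lemma diagonal_thresholds:
  fixes Q :: "nat \<Rightarrow> nat \<Rightarrow> nat \<Rightarrow> bool"
  assumes ex: "\<And>k i. \<exists>N. Q k i N" and up: "\<And>k i N N'. Q k i N \<Longrightarrow> N \<le> N' \<Longrightarrow> Q k i N'"
  shows "\<exists>m. mono m \<and> (\<forall>k i j. k \<le> i \<longrightarrow> i \<le> j \<longrightarrow> Q k i (m j))"
proof -
  obtain Nf where Nf: "\<And>k i. Q k i (Nf k i)" using ex by metis
  define m where "m j = (\<Sum>i\<le>j. \<Sum>k\<le>i. Nf k i)" for j
  have "mono m" unfolding m_def by (intro monoI sum_mono2) auto
  moreover have "Q k i (m j)" if "k \<le> i" "i \<le> j" for k i j
  proof -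
    have "Nf k i \<le> (\<Sum>k\<le>i. Nf k i)" using that by (intro member_le_sum) auto
    also have "\<dots> \<le> m j" unfolding m_def using that by (intro member_le_sum) auto
    finally show ?thesis using Nf up by blast
  qed
  ultimately show ?thesis by blast
qed

text \<open>The bound \<open>(1/2)^j / (j + 1)\<close> makes the j + 1 terms of the j-th diagonal sum
  contribute at most \<open>(1/2)^j\<close> in total.\<close>

context
  fixes t :: "'a::complex_inner sform" and v :: "nat \<Rightarrow> nat \<Rightarrow> 'a" and d :: "nat \<Rightarrow> 'a" and c :: real
  assumes S: "sesq_on (fdom t) (fval t)" and P: "pos_on (fdom t) (fval t)"
    and v_dom: "\<And>k j. v k j \<in> fdom t"
    and v_small: "\<And>k j. k \<le> j \<Longrightarrow> sqrt (quad (fval t) (v k j)) \<le> c * (1/2)^k"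
    and v_Cauchy: "\<And>k j j'. k \<le> j \<Longrightarrow> j \<le> j' \<Longrightarrow>
      sqrt (quad (fval t) (v k j' - v k j)) \<le> (1/2)^j / (real j + 1)"
    and v_close: "\<And>k j. k \<le> j \<Longrightarrow> hnorm (v k j - d k) \<le> (1/2)^j / (real j + 1)"
    and c: "0 \<le> c"
begin

lemma sqrt_quad_diagonal_sum_le: "sqrt (quad (fval t) (\<Sum>k\<le>j. v k j)) \<le> 2 * c"
proof -
  have "sqrt (quad (fval t) (\<Sum>k\<le>j. v k j)) \<le> (\<Sum>k\<le>j. sqrt (quad (fval t) (v k j)))"
    by (rule sqrt_quad_sum_le[OF S P]) (simp add: v_dom)
  also have "\<dots> \<le> (\<Sum>k\<le>j. c * (1/2)^k)" by (rule sum_mono) (simp add: v_small)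
  also have "\<dots> = c * (\<Sum>k\<le>j. (1/2)^k)" by (simp add: sum_distrib_left)
  also have "\<dots> \<le> c * 2" using sum_half_power_atMost_le c by (intro mult_left_mono) auto
  finally show ?thesis by simp
qed

lemma sqrt_quad_diagonal_sum_diff_le:
  assumes jj: "j \<le> j'"
  shows "sqrt (quad (fval t) ((\<Sum>k\<le>j'. v k j') - (\<Sum>k\<le>j. v k j))) \<le> (1 + c) * (1/2)^j"
proof -
  let ?old = "\<Sum>k\<le>j. v k j' - v k j" and ?new = "\<Sum>k\<in>{j<..j'}. v k j'"
  have "{..j'} = {..j} \<union> {j<..j'}" "{..j} \<inter> {j<..j'} = {}" using jj by auto
  hence "(\<Sum>k\<le>j'. v k j') = (\<Sum>k\<le>j. v k j') + ?new" by (simp add: sum.union_disjoint)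
  hence split: "(\<Sum>k\<le>j'. v k j') - (\<Sum>k\<le>j. v k j) = ?old + ?new"
    by (simp add: sum_subtractf)
  have sub: "lin_subspace (fdom t)" by (rule sesq_on_lin_subspace[OF S])
  have old_dom: "?old \<in> fdom t" by (intro lin_subspace_sum[OF sub] lin_subspace_diff[OF sub] v_dom)
  have new_dom: "?new \<in> fdom t" by (intro lin_subspace_sum[OF sub] v_dom)
  have "sqrt (quad (fval t) ?old) \<le> (\<Sum>k\<le>j. sqrt (quad (fval t) (v k j' - v k j)))"
    by (rule sqrt_quad_sum_le[OF S P]) (simp add: v_dom lin_subspace_diff[OF sub])
  also have "\<dots> \<le> (\<Sum>k\<le>j. (1/2)^j / (real j + 1))"
    by (rule sum_mono) (simp add: v_Cauchy jj)
  also have "\<dots> = (1/2)^j" by (simp add: add.commute)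
  finally have old: "sqrt (quad (fval t) ?old) \<le> (1/2)^j" .
  have "sqrt (quad (fval t) ?new) \<le> (\<Sum>k\<in>{j<..j'}. sqrt (quad (fval t) (v k j')))"
    by (rule sqrt_quad_sum_le[OF S P]) (simp add: v_dom)
  also have "\<dots> \<le> (\<Sum>k\<in>{j<..j'}. c * (1/2)^k)" by (rule sum_mono) (simp add: v_small)
  also have "\<dots> = c * (\<Sum>k\<in>{j<..j'}. (1/2)^k)" by (simp add: sum_distrib_left)
  also have "\<dots> \<le> c * (1/2)^j" using sum_half_power_greaterThanAtMost_le c
    by (intro mult_left_mono) auto
  finally have new: "sqrt (quad (fval t) ?new) \<le> c * (1/2)^j" .
  show ?thesis
    using sqrt_quad_add_le[OF S P old_dom new_dom] old new by (simp add: split algebra_simps)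
qed

lemma form_Cauchy_diagonal_sum: "form_Cauchy t (\<lambda>j. \<Sum>k\<le>j. v k j)"
  unfolding form_Cauchy_def
proof (intro conjI allI impI)
  fix n show "(\<Sum>k\<le>n. v k n) \<in> fdom t"
    by (intro lin_subspace_sum[OF sesq_on_lin_subspace[OF S]] v_dom)
next
  fix e :: real assume e: "0 < e"
  have "0 < sqrt e / (1 + c)" using e c by simp
  then obtain N where N: "\<forall>n\<ge>N. (1/2::real)^n < sqrt e / (1 + c)"
    using half_power_eventually_less by blast
  have small: "quad (fval t) ((\<Sum>k\<le>j'. v k j') - (\<Sum>k\<le>j. v k j)) < e" if "N \<le> j" "j \<le> j'" for j j'
  proof -
    have "sqrt (quad (fval t) ((\<Sum>k\<le>j'. v k j') - (\<Sum>k\<le>j. v k j))) \<le> (1 + c) * (1/2)^j"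
      by (rule sqrt_quad_diagonal_sum_diff_le[OF that(2)])
    also have "\<dots> < (1 + c) * (sqrt e / (1 + c))" using N that c
      by (intro mult_strict_left_mono) auto
    finally show ?thesis using c by simp
  qed
  have dom: "(\<Sum>k\<le>j. v k j) \<in> fdom t" for j
    by (intro lin_subspace_sum[OF sesq_on_lin_subspace[OF S]] v_dom)
  show "\<exists>N. \<forall>m\<ge>N. \<forall>n\<ge>N. quad (fval t) ((\<Sum>k\<le>m. v k m) - (\<Sum>k\<le>n. v k n)) < e"
    using small quad_diff_commute[OF S P dom dom] by (metis nle_le)
qed

lemma hconverges_diagonal_sum:
  assumes "hconverges (\<lambda>m. \<Sum>k<m. d k) L"
  shows "hconverges (\<lambda>j. \<Sum>k\<le>j. v k j) L"
  unfolding hconverges_def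
proof (rule real_tendsto_sandwich[rotated 2, OF tendsto_const])
  have "(\<lambda>j. hnorm ((\<Sum>k<Suc j. d k) - L)) \<longlonglongrightarrow> 0"
    using assms unfolding hconverges_def by (rule LIMSEQ_Suc)
  moreover have "(\<lambda>j. (1/2::real)^j) \<longlonglongrightarrow> 0"
    by (rule LIMSEQ_power_zero) simp
  ultimately show "(\<lambda>j. (1/2::real)^j + hnorm ((\<Sum>k<Suc j. d k) - L)) \<longlonglongrightarrow> 0"
    using tendsto_add by fastforce
  show "\<forall>\<^sub>F j in sequentially. 0 \<le> hnorm ((\<Sum>k\<le>j. v k j) - L)"
    by (simp add: hnorm_nonneg)
  show "\<forall>\<^sub>F j in sequentially. hnorm ((\<Sum>k\<le>j. v k j) - L) \<le> (1/2)^j + hnorm ((\<Sum>k<Suc j. d k) - L)"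
  proof (intro always_eventually allI)
    fix j
    have "(\<Sum>k\<le>j. v k j) - L = (\<Sum>k\<le>j. v k j - d k) + ((\<Sum>k<Suc j. d k) - L)"
      unfolding lessThan_Suc_atMost by (simp add: sum_subtractf)
    hence "hnorm ((\<Sum>k\<le>j. v k j) - L) \<le> hnorm (\<Sum>k\<le>j. v k j - d k) + hnorm ((\<Sum>k<Suc j. d k) - L)"
      using hnorm_add_le by metis
    also have "hnorm (\<Sum>k\<le>j. v k j - d k) \<le> (\<Sum>k\<le>j. hnorm (v k j - d k))"
      by (rule hnorm_sum_le)
    also have "\<dots> \<le> (\<Sum>k\<le>j. (1/2)^j / (real j + 1))"
      by (rule sum_mono) (simp add: v_close)
    also have "\<dots> = (1/2)^j" by (simp add: add.commute)
    finally show "hnorm ((\<Sum>k\<le>j. v k j) - L) \<le> (1/2)^j + hnorm ((\<Sum>k<Suc j. d k) - L)"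
      by simp
  qed
qed

end

text \<open>The approximating sequence is a diagonal choice of partial sums \<open>\<Sum>k\<le>j. w k (m j)\<close>.\<close>

lemma approximates_series:
  fixes t :: "'a::complex_inner sform"
  assumes S: "sesq_on (fdom t) (fval t)" and P: "pos_on (fdom t) (fval t)"
    and approx: "\<And>k. approximates t (d k) (w k)"
    and bnd: "\<And>k. \<exists>J. \<forall>j\<ge>J. sqrt (quad (fval t) (w k j)) \<le> c * (1/2)^k"
    and sums: "hconverges (\<lambda>m. \<Sum>k<m. d k) L"
    and c: "0 \<le> c"
  shows "\<exists>Z. approximates t L Z \<and> (\<forall>j. sqrt (quad (fval t) (Z j)) \<le> 2 * c)"
proof -
  define ep where "ep i = (1/2::real)^i / (real i + 1)" for i
  have ep_pos: "0 < ep i" for i by (simp add: ep_def)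
  define Q where "Q k i N \<longleftrightarrow> (\<forall>a\<ge>N. \<forall>b\<ge>N. quad (fval t) (w k a - w k b) < (ep i)^2
      \<and> hnorm (w k a - d k) < ep i \<and> sqrt (quad (fval t) (w k a)) \<le> c * (1/2)^k)" for k i N
  have "\<exists>N. Q k i N" for k i
  proof -
    obtain N1 where "\<forall>a\<ge>N1. \<forall>b\<ge>N1. quad (fval t) (w k a - w k b) < (ep i)^2"
      using approx[of k] ep_pos[of i] unfolding approximates_def form_Cauchy_def
        by (meson zero_less_power)
    moreover obtain N2 where "\<forall>a\<ge>N2. hnorm (w k a - d k) < ep i"
      using approx[of k] ep_pos[of i] unfolding approximates_def hconverges_iff by blast
    moreover obtain N3 where "\<forall>j\<ge>N3. sqrt (quad (fval t) (w k j)) \<le> c * (1/2)^k"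
      using bnd by blast
    ultimately have "Q k i (max N1 (max N2 N3))" unfolding Q_def by simp
    thus ?thesis by blast
  qed
  moreover have "Q k i N'" if "Q k i N" "N \<le> N'" for k i N N'
    using that unfolding Q_def by (meson order_trans)
  ultimately obtain m where m: "mono m" "\<And>k i j. k \<le> i \<Longrightarrow> i \<le> j \<Longrightarrow> Q k i (m j)"
    using diagonal_thresholds[of Q] by blast
  define v where "v k j = w k (m j)" for k j
  have v_dom: "v k j \<in> fdom t" for k j
    using approx form_Cauchy_in_fdom[OF S P] unfolding v_def approximates_def by blast
  have v_small: "sqrt (quad (fval t) (v k j)) \<le> c * (1/2)^k" if "k \<le> j" for k j
    using m(2)[of k k j] that unfolding Q_def v_def by blast
  have v_Cauchy: "sqrt (quad (fval t) (v k j' - v k j)) \<le> (1/2)^j / (real j + 1)"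
    if "k \<le> j" "j \<le> j'" for k j j'
  proof -
    have "quad (fval t) (v k j' - v k j) < (ep j)^2"
      using m(2)[of k j j] monoD[OF m(1) that(2)] that unfolding Q_def v_def by blast
    hence "sqrt (quad (fval t) (v k j' - v k j)) < sqrt ((ep j)^2)" by (rule real_sqrt_less_mono)
    thus ?thesis using ep_pos[of j] by (simp add: ep_def)
  qed
  have v_close: "hnorm (v k j - d k) \<le> (1/2)^j / (real j + 1)" if "k \<le> j" for k j
    using m(2)[of k j j] that unfolding Q_def v_def ep_def by (meson order_refl less_imp_le)
  note diag = S P v_dom v_small v_Cauchy v_close c
  show ?thesis unfolding approximates_def
    using form_Cauchy_diagonal_sum[OF diag] hconverges_diagonal_sum[OF diag sums]
      sqrt_quad_diagonal_sum_le[OF diag] by blast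
qed

lemma tnorm_eq: assumes "x \<in> fdom s"
  shows "tnorm s x = sqrt (quad (fval s) x + (1 + lower_bound_form s) * (hnorm x)^2)"
  unfolding tnorm_def quad_def hnorm_power2 by simp

lemma positive_form_quad_nonneg: "positive_form s \<Longrightarrow> x \<in> fdom s \<Longrightarrow> 0 \<le> quad (fval s) x"
  by (simp add: positive_form_def quad_def)

text \<open>Without a unit vector in the domain, the infimum defining the lower bound is junk.\<close>

lemma lower_bound_form_nonneg: assumes "positive_form s" "u \<in> fdom s" "hnorm u = 1"
  shows "0 \<le> lower_bound_form s"
  unfolding lower_bound_form_def
  using assms by (intro cInf_greatest) (auto simp: positive_form_def)

context
  fixes s :: "'a::complex_inner sform"
  assumes Ps: "positive_form s" and m0: "0 \<le> lower_bound_form s"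
begin

lemma quad_le_tnorm_power2: "x \<in> fdom s \<Longrightarrow> quad (fval s) x \<le> (tnorm s x)^2"
  using positive_form_quad_nonneg[OF Ps] m0 by (simp add: tnorm_eq)

lemma hnorm_le_tnorm: assumes "x \<in> fdom s" shows "hnorm x \<le> tnorm s x"
proof -
  have "(hnorm x)^2 \<le> quad (fval s) x + (1 + lower_bound_form s) * (hnorm x)^2"
    using positive_form_quad_nonneg[OF Ps assms] m0 by (simp add: mult_le_cancel_right1 add_increasing)
  hence "sqrt ((hnorm x)^2) \<le> tnorm s x" unfolding tnorm_eq[OF assms] by (rule real_sqrt_le_mono)
  thus ?thesis using hnorm_nonneg by simp
qed

lemma tnorm_less: assumes "x \<in> fdom s" "quad (fval s) x < e^2 / 2" "hnorm x < e / sqrt (2 * (1 + lower_bound_form s))" "0 < e"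
  shows "tnorm s x < e"
proof -
  let ?m = "1 + lower_bound_form s"
  have mp: "0 < ?m" using m0 by simp
  have "(hnorm x)^2 < (e / sqrt (2 * ?m))^2"
    using assms(3) hnorm_nonneg by (intro power_strict_mono) auto
  also have "\<dots> = e^2 / (2 * ?m)" using mp by (simp add: power_divide)
  finally have hlt: "(hnorm x)^2 < e^2 / (2 * ?m)" .
  have "?m * (hnorm x)^2 < ?m * (e^2 / (2 * ?m))" by (rule mult_strict_left_mono[OF hlt mp])
  also have "\<dots> = e^2 / 2" using mp by (simp add: field_simps)
  finally have "quad (fval s) x + ?m * (hnorm x)^2 < e^2" using assms(2) by simp
  hence "tnorm s x < sqrt (e^2)" unfolding tnorm_eq[OF assms(1)] by (rule real_sqrt_less_mono)
  thus ?thesis using assms(4) by simp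
qed

lemma tnorm_small:
  fixes y :: "nat \<Rightarrow> 'a"
  assumes "\<And>n. y n \<in> fdom s"
    and "\<forall>e>0. \<exists>N. \<forall>n\<ge>N. quad (fval s) (y n) < e" "\<forall>e>0. \<exists>N. \<forall>n\<ge>N. hnorm (y n) < e"
  shows "\<forall>e>0. \<exists>N. \<forall>n\<ge>N. tnorm s (y n) < e"
proof (intro allI impI)
  fix e :: real assume e: "0 < e"
  have "0 < e^2 / 2" "0 < e / sqrt (2 * (1 + lower_bound_form s))" using e m0 by simp_all
  then obtain N1 N2 where N1: "\<forall>n\<ge>N1. quad (fval s) (y n) < e^2 / 2"
    and N2: "\<forall>n\<ge>N2. hnorm (y n) < e / sqrt (2 * (1 + lower_bound_form s))"
    using assms(2,3) by meson
  have "tnorm s (y n) < e" if "N1 + N2 \<le> n" for n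
  proof (rule tnorm_less[OF assms(1) _ _ e])
    have "N1 \<le> n" "N2 \<le> n" using that by linarith+
    thus "quad (fval s) (y n) < e^2 / 2" "hnorm (y n) < e / sqrt (2 * (1 + lower_bound_form s))"
      using N1 N2 by blast+
  qed
  thus "\<exists>N. \<forall>n\<ge>N. tnorm s (y n) < e" by blast
qed

lemma tnorm_Cauchy:
  fixes u :: "nat \<Rightarrow> 'a"
  assumes "\<forall>e>0. \<exists>N. \<forall>m\<ge>N. \<forall>n\<ge>N. quad (fval s) (u m - u n) < e"
    and "\<forall>e>0. \<exists>N. \<forall>m\<ge>N. \<forall>n\<ge>N. hnorm (u m - u n) < e"
    and "\<And>m n. u m - u n \<in> fdom s"
  shows "\<forall>e>0. \<exists>N. \<forall>m\<ge>N. \<forall>n\<ge>N. tnorm s (u m - u n) < e"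
proof (intro allI impI)
  fix e :: real assume e: "0 < e"
  have "0 < e^2 / 2" "0 < e / sqrt (2 * (1 + lower_bound_form s))" using e m0 by simp_all
  then obtain N1 N2 where N1: "\<forall>m\<ge>N1. \<forall>n\<ge>N1. quad (fval s) (u m - u n) < e^2 / 2"
    and N2: "\<forall>m\<ge>N2. \<forall>n\<ge>N2. hnorm (u m - u n) < e / sqrt (2 * (1 + lower_bound_form s))"
    using assms(1,2) by meson
  have "tnorm s (u m - u n) < e" if "N1 + N2 \<le> m" "N1 + N2 \<le> n" for m n
  proof (rule tnorm_less[OF assms(3) _ _ e])
    have "N1 \<le> m" "N1 \<le> n" "N2 \<le> m" "N2 \<le> n" using that by linarith+
    thus "quad (fval s) (u m - u n) < e^2 / 2" "hnorm (u m - u n) < e / sqrt (2 * (1 + lower_bound_form s))"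
      using N1 N2 by blast+
  qed
  thus "\<exists>N. \<forall>m\<ge>N. \<forall>n\<ge>N. tnorm s (u m - u n) < e" by blast
qed

lemma Cauchy_if_tnorm_Cauchy:
  fixes u :: "nat \<Rightarrow> 'a"
  assumes "\<forall>e>0. \<exists>N. \<forall>m\<ge>N. \<forall>n\<ge>N. tnorm s (u m - u n) < e"
    and "\<And>m n. u m - u n \<in> fdom s"
  shows "\<forall>e>0. \<exists>N. \<forall>m\<ge>N. \<forall>n\<ge>N. quad (fval s) (u m - u n) < e"
    and "\<forall>e>0. \<exists>N. \<forall>m\<ge>N. \<forall>n\<ge>N. hnorm (u m - u n) < e"
proof (intro allI impI)
  fix e :: real assume e: "0 < e"
  then obtain N where N: "\<forall>m\<ge>N. \<forall>n\<ge>N. tnorm s (u m - u n) < sqrt e"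
    using assms(1) by (meson real_sqrt_gt_zero)
  have "quad (fval s) (u m - u n) < e" if "N \<le> m" "N \<le> n" for m n
  proof -
    have "0 \<le> tnorm s (u m - u n)" using hnorm_le_tnorm[OF assms(2)] hnorm_nonneg order_trans
      by blast
    hence "(tnorm s (u m - u n))^2 < (sqrt e)^2" using N that by (intro power_strict_mono) auto
    hence "(tnorm s (u m - u n))^2 < e" using e by simp
    thus ?thesis using quad_le_tnorm_power2[OF assms(2)] by (meson le_less_trans)
  qed
  thus "\<exists>N. \<forall>m\<ge>N. \<forall>n\<ge>N. quad (fval s) (u m - u n) < e" by blast
next
  show "\<forall>e>0. \<exists>N. \<forall>m\<ge>N. \<forall>n\<ge>N. hnorm (u m - u n) < e"
  proof (intro allI impI)
    fix e :: real assume "0 < e"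
    then obtain N where "\<forall>m\<ge>N. \<forall>n\<ge>N. tnorm s (u m - u n) < e" using assms(1)
      by blast
    thus "\<exists>N. \<forall>m\<ge>N. \<forall>n\<ge>N. hnorm (u m - u n) < e"
      using hnorm_le_tnorm[OF assms(2)] by (blast intro: le_less_trans)
  qed
qed

end

lemma closed_form_tnorm_tendsto_zero:
  fixes s :: "'a::complex_inner sform"
  assumes s: "is_sesq_form s" "positive_form s" "is_closed_form s" and m0: "0 \<le> lower_bound_form s"
    and uD: "\<And>n. u n \<in> fdom s"
    and uc: "\<forall>e>0. \<exists>N. \<forall>m\<ge>N. \<forall>n\<ge>N. quad (fval s) (u m - u n) < e"
    and u0: "hconverges u 0"
  shows "\<forall>e>0. \<exists>N. \<forall>n\<ge>N. tnorm s (u n) < e"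
proof -
  have sub: "lin_subspace (fdom s)" using s(1) by (simp add: is_sesq_form_def)
  have hC: "\<forall>e>0. \<exists>N. \<forall>m\<ge>N. \<forall>n\<ge>N. hnorm (u m - u n) < e"
  proof (intro allI impI)
    fix e :: real assume "0 < e"
    hence "0 < e / 2" by simp
    then obtain N where N: "\<forall>n\<ge>N. hnorm (u n - 0) < e / 2" using u0 unfolding hconverges_iff
      by blast
    have "hnorm (u m - u n) < e" if "N \<le> m" "N \<le> n" for m n
    proof -
      have "hnorm (u m) < e / 2" "hnorm (u n) < e / 2" using N that by auto
      thus ?thesis using hnorm_diff_le[of "u m" "u n"] by linarith
    qed
    thus "\<exists>N. \<forall>m\<ge>N. \<forall>n\<ge>N. hnorm (u m - u n) < e" by blast
  qed
  have "\<forall>e>0. \<exists>N. \<forall>m\<ge>N. \<forall>n\<ge>N. tnorm s (u m - u n) < e"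
    by (rule tnorm_Cauchy[OF s(2) m0 uc hC]) (use uD lin_subspace_diff[OF sub] in blast)
  then obtain L where L: "L \<in> fdom s" "\<forall>e>0. \<exists>N. \<forall>n\<ge>N. tnorm s (u n - L) < e"
    using s(3) uD unfolding is_closed_form_def by blast
  have "hconverges u L" unfolding hconverges_iff
  proof (intro allI impI)
    fix e :: real assume "0 < e"
    then obtain N where "\<forall>n\<ge>N. tnorm s (u n - L) < e" using L(2) by blast
    thus "\<exists>N. \<forall>n\<ge>N. hnorm (u n - L) < e"
      using hnorm_le_tnorm[OF s(2) m0] uD L(1) lin_subspace_diff[OF sub] by (blast intro: le_less_trans)
  qed
  hence "L = 0" using hconverges_unique u0 by blast
  thus ?thesis using L(2) by simp
qed

lemma closable_form_quad_tendsto_zero: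
  fixes r :: "'a::complex_inner sform"
  assumes cl: "is_closable_form r" and subr: "lin_subspace (fdom r)"
    and u1: "u1 \<in> fdom r" "hnorm u1 = 1"
    and uD: "\<And>n. u n \<in> fdom r"
    and uc: "\<forall>e>0. \<exists>N. \<forall>m\<ge>N. \<forall>n\<ge>N. quad (fval r) (u m - u n) < e"
    and u0: "hconverges u 0"
  shows "(\<lambda>n. quad (fval r) (u n)) \<longlonglongrightarrow> 0"
proof -
  obtain s where s: "is_sesq_form s" "positive_form s" "is_closed_form s" "fdom r \<subseteq> fdom s"
    and agree: "\<forall>x\<in>fdom r. \<forall>y\<in>fdom r. fval s x y = fval r x y"
    using cl unfolding is_closable_form_def by blast
  have m0: "0 \<le> lower_bound_form s" using lower_bound_form_nonneg[OF s(2)] u1 s(4) by blast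
  have usD: "u n \<in> fdom s" for n using uD s(4) by blast
  have qeq: "quad (fval s) x = quad (fval r) x" if "x \<in> fdom r" for x
    using agree that by (simp add: quad_def)
  have "\<forall>e>0. \<exists>N. \<forall>m\<ge>N. \<forall>n\<ge>N. quad (fval s) (u m - u n) < e"
    using uc qeq uD lin_subspace_diff[OF subr] by simp
  from closed_form_tnorm_tendsto_zero[OF s(1-3) m0 usD this u0]
  have small: "\<forall>e>0. \<exists>N. \<forall>n\<ge>N. quad (fval r) (u n) < e"
  proof (intro allI impI)
    fix e :: real assume tn: "\<forall>e>0. \<exists>N. \<forall>n\<ge>N. tnorm s (u n) < e" and e: "0 < e"
    then obtain N where N: "\<forall>n\<ge>N. tnorm s (u n) < sqrt e" by (meson real_sqrt_gt_zero)
    have "quad (fval r) (u n) < e" if "N \<le> n" for n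
    proof -
      have "0 \<le> tnorm s (u n)" using hnorm_le_tnorm[OF s(2) m0 usD] hnorm_nonneg order_trans by blast
      hence "(tnorm s (u n))^2 < (sqrt e)^2" using N that by (intro power_strict_mono) auto
      hence "(tnorm s (u n))^2 < e" using e by simp
      thus ?thesis using quad_le_tnorm_power2[OF s(2) m0 usD] qeq[OF uD] by (metis le_less_trans)
    qed
    thus "\<exists>N. \<forall>n\<ge>N. quad (fval r) (u n) < e" by blast
  qed
  have "0 \<le> quad (fval r) (u n)" for n
    using positive_form_quad_nonneg[OF s(2) usD] qeq[OF uD] by simp
  thus ?thesis unfolding lim_sequentially dist_real_def using small by simp
qed

definition lsc_form :: "'a::complex_inner sform \<Rightarrow> 'a \<Rightarrow> 'a \<Rightarrow> complex" where
  "lsc_form t = (SOME B. sesq_on (lsc_dom t) B \<and> (\<forall>x\<in>lsc_dom t. B x x = complex_of_real (lsc_quad t x)))"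

definition restrict_form :: "'a::complex_inner set \<Rightarrow> ('a \<Rightarrow> 'a \<Rightarrow> complex) \<Rightarrow> 'a sform" where
  "restrict_form D B = (D, \<lambda>x y. if x \<in> D \<and> y \<in> D then B x y else 0)"

lemma fdom_restrict_form [simp]: "fdom (restrict_form D B) = D" by (simp add: restrict_form_def fdom_def)
lemma fval_restrict_form: "fval (restrict_form D B) x y = (if x \<in> D \<and> y \<in> D then B x y else 0)"
  by (simp add: restrict_form_def fval_def)

lemma sesq_on_subset: assumes "sesq_on E B" "lin_subspace D" "D \<subseteq> E" shows "sesq_on D B"
  using assms unfolding sesq_on_def by blast

lemma is_sesq_form_restrict_form: assumes "sesq_on D B" shows "is_sesq_form (restrict_form D B)"
proof -
  have sesq_on_lin_subspace: "lin_subspace D" using assms by (simp add: sesq_on_def)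
  show ?thesis unfolding is_sesq_form_def fdom_restrict_form fval_restrict_form
    using assms sesq_on_lin_subspace lin_subspace_add[OF sesq_on_lin_subspace] lin_subspace_scaleC[OF sesq_on_lin_subspace]
      unfolding sesq_on_def by auto
qed

context
  fixes t :: "'a::complex_inner sform"
  assumes S: "sesq_on (fdom t) (fval t)" and P: "pos_on (fdom t) (fval t)"
begin

lemma lsc_form_prop: "sesq_on (lsc_dom t) (lsc_form t) \<and> (\<forall>x\<in>lsc_dom t. lsc_form t x x = complex_of_real (lsc_quad t x))"
  unfolding lsc_form_def by (rule someI_ex[OF ex_sesq_form_lsc_quad[OF S P]])

lemma sesq_on_lsc_form: "sesq_on (lsc_dom t) (lsc_form t)" using lsc_form_prop by blast
lemma lsc_form_diag: "x \<in> lsc_dom t \<Longrightarrow> lsc_form t x x = complex_of_real (lsc_quad t x)"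
  using lsc_form_prop by blast
lemma pos_on_lsc_form: "pos_on (lsc_dom t) (lsc_form t)" unfolding pos_on_def
  using lsc_form_diag lsc_quad_nonneg[OF S P] by simp
lemma quad_lsc_form: "x \<in> lsc_dom t \<Longrightarrow> quad (lsc_form t) x = lsc_quad t x"
  using lsc_form_diag by (simp add: quad_def)

lemma sqrt_lsc_quad_add_le: assumes "x \<in> lsc_dom t" "y \<in> lsc_dom t"
  shows "sqrt (lsc_quad t (x + y)) \<le> sqrt (lsc_quad t x) + sqrt (lsc_quad t y)"
  using sqrt_quad_add_le[OF sesq_on_lsc_form pos_on_lsc_form assms] quad_lsc_form assms lin_subspace_add[OF lin_subspace_lsc_dom[OF S P]]
    by simp

lemma lsc_quad_minus: "x \<in> lsc_dom t \<Longrightarrow> lsc_quad t (- x) = lsc_quad t x"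
  using lsc_quad_scaleC[OF S P, of x "-1"] by (simp add: scaleC_minus_one)

lemma lsc_quad_series_le:
  assumes e_dom: "\<And>k. e k \<in> lsc_dom t"
    and e_small: "\<And>k. lsc_quad t (e k) < c^2 * (1/4)^k"
    and sums: "hconverges (\<lambda>m. \<Sum>k<m. e k) L"
    and c: "0 \<le> c"
  shows "L \<in> lsc_dom t \<and> lsc_quad t L \<le> 4 * c^2"
proof -
  have "\<exists>z. approximates t (e k) z \<and> lim_quad t z < c^2 * (1/4)^k" for k
  proof -
    have "0 < c^2 * (1/4)^k - lsc_quad t (e k)" using e_small[of k] by simp
    from lsc_quad_approx[OF S P e_dom[of k] this] show ?thesis by auto
  qed
  then obtain w where w: "\<And>k. approximates t (e k) (w k)" "\<And>k. lim_quad t (w k) < c^2 * (1/4)^k"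
    by metis
  have "\<exists>J. \<forall>j\<ge>J. sqrt (quad (fval t) (w k j)) \<le> c * (1/2)^k" for k
  proof -
    have "(\<lambda>j. quad (fval t) (w k j)) \<longlonglongrightarrow> lim_quad t (w k)"
      using form_Cauchy_quad_tendsto[OF S P] w(1) unfolding approximates_def by blast
    from order_tendstoD(2)[OF this w(2)]
    obtain J where J: "\<forall>j\<ge>J. quad (fval t) (w k j) < c^2 * (1/4)^k"
      unfolding eventually_sequentially by blast
    have "sqrt (c^2 * (1/4)^k) = c * (1/2)^k" using c by (simp add: real_sqrt_mult sqrt_quarter_power)
    thus ?thesis using J by (metis less_imp_le real_sqrt_le_mono)
  qed
  then obtain Z where Z: "approximates t L Z" "\<And>j. sqrt (quad (fval t) (Z j)) \<le> 2 * c"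
    using approximates_series[OF S P w(1) _ sums c] by blast
  have "lsc_quad t L \<le> lim_quad t Z" by (rule lsc_quad_le[OF S P Z(1)])
  also have "\<dots> \<le> (2 * c)^2"
  proof (rule LIMSEQ_le_const2)
    show "(\<lambda>j. quad (fval t) (Z j)) \<longlonglongrightarrow> lim_quad t Z"
      using form_Cauchy_quad_tendsto[OF S P] Z(1) unfolding approximates_def by blast
    have "quad (fval t) (Z j) \<le> (2 * c)^2" for j
    proof -
      have "0 \<le> quad (fval t) (Z j)"
        using quad_nonneg[OF S P] form_Cauchy_in_fdom[OF S P] Z(1) unfolding approximates_def by blast
      thus ?thesis using power_mono[OF Z(2)[of j], of 2] by simp
    qed
    thus "\<exists>N. \<forall>n\<ge>N. quad (fval t) (Z n) \<le> (2 * c)^2" by blast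
  qed
  finally show ?thesis using Z(1) unfolding lsc_dom_def by (auto simp: power_mult_distrib)
qed

text \<open>The tail \<open>L - X (nk K)\<close> of a fast subsequence is a series as in \<open>lsc_quad_series_le\<close>.\<close>

lemma lsc_quad_complete:
  assumes XD: "\<And>n. X n \<in> lsc_dom t"
   and Xc: "\<forall>e>0. \<exists>N. \<forall>a\<ge>N. \<forall>b\<ge>N. lsc_quad t (X a - X b) < e"
   and XL: "hconverges X L"
  shows "L \<in> lsc_dom t \<and> (\<forall>e>0. \<exists>N. \<forall>n\<ge>N. lsc_quad t (X n - L) < e)"
proof -
  have sub: "lin_subspace (lsc_dom t)" by (rule lin_subspace_lsc_dom[OF S P])
  obtain nk where nk: "\<And>k. k \<le> nk k" "\<And>k. nk k \<le> nk (Suc k)"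
    "\<And>k a b. nk k \<le> a \<Longrightarrow> nk k \<le> b \<Longrightarrow> lsc_quad t (X a - X b) < (1/4)^k"
    by (rule Cauchy_fast_subseq[of "\<lambda>a b. lsc_quad t (X a - X b)" "1/4"]) (use Xc in auto)
  define d where "d k = X (nk (Suc k)) - X (nk k)" for k
  have tail: "L - X (nk K) \<in> lsc_dom t \<and> lsc_quad t (L - X (nk K)) \<le> 4 * ((1/2)^K)^2" for K
  proof (rule lsc_quad_series_le)
    show "d (K + k) \<in> lsc_dom t" for k unfolding d_def using XD lin_subspace_diff[OF sub] by blast
    have "lsc_quad t (d (K + k)) < (1/4)^(K + k)" for k
      unfolding d_def using nk(2) by (intro nk(3)) auto
    thus "lsc_quad t (d (K + k)) < ((1/2)^K)^2 * (1/4)^k" for k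
      by (simp add: power_add power_mult_distrib[symmetric] power2_eq_square)
    have partial: "(\<Sum>k<m. d (K + k)) = X (nk (K + m)) - X (nk K)" for m
      by (induction m) (simp_all add: d_def)
    show "hconverges (\<lambda>m. \<Sum>k<m. d (K + k)) (L - X (nk K))"
      unfolding hconverges_iff partial
    proof (intro allI impI)
      fix e :: real assume "0 < e"
      then obtain N where N: "\<forall>n\<ge>N. hnorm (X n - L) < e" using XL unfolding hconverges_iff
        by blast
      have "N \<le> nk (K + n)" if "N \<le> n" for n using nk(1)[of "K + n"] that by simp
      thus "\<exists>N. \<forall>n\<ge>N. hnorm (X (nk (K + n)) - X (nk K) - (L - X (nk K))) < e" using N
        by auto
    qed
  qed simp
  have LD: "L \<in> lsc_dom t"
    using lin_subspace_add[OF sub XD[of "nk 0"] tail[of 0, THEN conjunct1]] by simp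
  have "\<exists>N. \<forall>n\<ge>N. lsc_quad t (X n - L) < e" if e: "0 < e" for e
  proof -
    have "0 < sqrt e / 3" using e by simp
    then obtain K where K: "(1/2::real)^K < sqrt e / 3" using half_power_eventually_less by blast
    have "lsc_quad t (X n - L) < e" if n: "nk K \<le> n" for n
    proof -
      have dom: "X n - X (nk K) \<in> lsc_dom t" "X (nk K) - L \<in> lsc_dom t"
        using XD LD lin_subspace_diff[OF sub] by blast+
      have "lsc_quad t (X n - X (nk K)) < (1/4)^K" using n by (intro nk(3)) auto
      hence s1: "sqrt (lsc_quad t (X n - X (nk K))) < (1/2)^K"
        by (metis sqrt_quarter_power real_sqrt_less_mono)
      have "lsc_quad t (X (nk K) - L) \<le> 4 * ((1/2)^K)^2"
        using tail[of K] lsc_quad_minus[of "L - X (nk K)"] by simp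
      hence "sqrt (lsc_quad t (X (nk K) - L)) \<le> sqrt (4 * ((1/2)^K)^2)" by (rule real_sqrt_le_mono)
      hence s2: "sqrt (lsc_quad t (X (nk K) - L)) \<le> 2 * (1/2)^K" by (simp add: real_sqrt_mult)
      have "sqrt (lsc_quad t (X n - L)) \<le> sqrt (lsc_quad t (X n - X (nk K))) + sqrt (lsc_quad t (X (nk K) - L))"
        using sqrt_lsc_quad_add_le[OF dom] by simp
      also have "\<dots> < sqrt e" using s1 s2 K by simp
      finally show ?thesis by simp
    qed
    thus ?thesis by blast
  qed
  thus ?thesis using LD by blast
qed

end

lemma is_closed_form_lsc_extension:
  fixes t :: "'a::chilbert sform"
  assumes S: "sesq_on (fdom t) (fval t)" and P: "pos_on (fdom t) (fval t)"
    and u1: "u1 \<in> fdom t" "hnorm u1 = 1"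
  shows "is_closed_form (restrict_form (lsc_dom t) (lsc_form t))"
proof -
  let ?s = "restrict_form (lsc_dom t) (lsc_form t)"
  have ps: "positive_form ?s" unfolding positive_form_def fval_restrict_form fdom_restrict_form
    using pos_on_lsc_form[OF S P] unfolding pos_on_def by simp
  have m0: "0 \<le> lower_bound_form ?s" using lower_bound_form_nonneg[OF ps] u1 fdom_in_lsc_dom[OF S P]
    by force
  have qs: "quad (fval ?s) x = lsc_quad t x" if "x \<in> lsc_dom t" for x
    using that quad_lsc_form[OF S P] by (simp add: quad_def fval_restrict_form)
  have sub: "lin_subspace (lsc_dom t)" by (rule lin_subspace_lsc_dom[OF S P])
  show ?thesis unfolding is_closed_form_def
  proof (intro conjI ps allI impI)
    fix X :: "nat \<Rightarrow> 'a"
    assume "(\<forall>n. X n \<in> fdom ?s) \<and> (\<forall>e>0. \<exists>N. \<forall>m\<ge>N. \<forall>n\<ge>N. tnorm ?s (X m - X n) < e)"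
    hence XD: "\<And>n. X n \<in> lsc_dom t" and tc: "\<forall>e>0. \<exists>N. \<forall>m\<ge>N. \<forall>n\<ge>N. tnorm ?s (X m - X n) < e"
      by auto
    have diff_dom: "X m - X n \<in> fdom ?s" for m n using XD lin_subspace_diff[OF sub] by simp
    have "\<forall>e>0. \<exists>N. \<forall>m\<ge>N. \<forall>n\<ge>N. lsc_quad t (X m - X n) < e"
      using Cauchy_if_tnorm_Cauchy(1)[OF ps m0 tc diff_dom] qs XD lin_subspace_diff[OF sub] by simp
    moreover obtain L where XL: "hconverges X L"
    proof -
      have "\<exists>L. \<forall>e>0. \<exists>N. \<forall>n\<ge>N. sqrt (Re (cinner (X n - L) (X n - L))) < e"
        by (rule hilbert_complete)
          (use Cauchy_if_tnorm_Cauchy(2)[OF ps m0 tc diff_dom] in \<open>simp add: hnorm_def\<close>)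
      thus thesis using that unfolding hconverges_iff hnorm_def by blast
    qed
    ultimately obtain LD: "L \<in> lsc_dom t" and Lc: "\<forall>e>0. \<exists>N. \<forall>n\<ge>N. lsc_quad t (X n - L) < e"
      using lsc_quad_complete[OF S P, where X=X] XD by blast
    have XL_dom: "X n - L \<in> fdom ?s" for n using XD LD lin_subspace_diff[OF sub] by simp
    have "\<forall>e>0. \<exists>N. \<forall>n\<ge>N. tnorm ?s (X n - L) < e"
      by (rule tnorm_small[OF ps m0 XL_dom])
        (use Lc qs XD LD lin_subspace_diff[OF sub] XL in \<open>simp_all add: hconverges_iff\<close>)
    thus "\<exists>L\<in>fdom ?s. \<forall>e>0. \<exists>N. \<forall>n\<ge>N. tnorm ?s (X n - L) < e"
      using LD by auto
  qed
qed


section \<open>Existence of the regular part\<close>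

definition lsc_part :: "'a::complex_inner sform \<Rightarrow> 'a sform" where
  "lsc_part t = restrict_form (fdom t) (lsc_form t)"

lemma regular_candidatesD:
  assumes "r \<in> regular_candidates t"
  shows "is_sesq_form r" "positive_form r" "is_closable_form r" "fdom r = fdom t"
    "sesq_on (fdom t) (fval r)" "pos_on (fdom t) (fval r)"
    "\<And>x. x \<in> fdom t \<Longrightarrow> quad (fval r) x \<le> quad (fval t) x"
proof -
  have a: "bilinear_form r" "positive_form r" "is_closable_form r" "fdom r = fdom t"
    "\<forall>x\<in>fdom t. Re (fval r x x) \<le> Re (fval t x x)"
    using assms unfolding regular_candidates_def by auto
  have s: "is_sesq_form r" using a(1) by (simp add: bilinear_form_def)
  show "is_sesq_form r" "positive_form r" "is_closable_form r" "fdom r = fdom t" using s a by auto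
  show "sesq_on (fdom t) (fval r)" using sesq_on_fval[OF s] a(4) by simp
  show "pos_on (fdom t) (fval r)" using pos_on_fval[OF a(2)] a(4) by simp
  show "\<And>x. x \<in> fdom t \<Longrightarrow> quad (fval r) x \<le> quad (fval t) x" using a(5)
    by (simp add: quad_def)
qed

lemma sesq_form_eqI:
  assumes r: "is_sesq_form r" and s: "is_sesq_form s" and dom: "fdom r = fdom s"
    and diag: "\<And>x. x \<in> fdom r \<Longrightarrow> fval r x x = fval s x x"
  shows "r = s"
proof -
  have "fval r x y = fval s x y" for x y
  proof (cases "x \<in> fdom r \<and> y \<in> fdom r")
    case True
    thus ?thesis using sesq_on_eq_if_diag_eq[OF sesq_on_fval[OF r]] sesq_on_fval[OF s] dom diag by simp
  next
    case False
    thus ?thesis using r s dom unfolding is_sesq_form_def by metis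
  qed
  hence "fval r = fval s" by (intro ext)
  thus ?thesis using dom unfolding fval_def fdom_def by (simp add: prod_eq_iff)
qed

text \<open>This is where closability of the candidates enters the maximality of the envelope.\<close>

lemma regular_candidate_quad_diff_tendsto_zero:
  fixes t :: "'a::complex_inner sform"
  assumes S: "sesq_on (fdom t) (fval t)" and P: "pos_on (fdom t) (fval t)"
    and u1: "u1 \<in> fdom t" "hnorm u1 = 1"
    and r: "r \<in> regular_candidates t" and x: "x \<in> fdom t" and approx: "approximates t x z"
  shows "(\<lambda>n. quad (fval r) (x - z n)) \<longlonglongrightarrow> 0"
proof (rule closable_form_quad_tendsto_zero)
  note rD = regular_candidatesD[OF r]
  have sub: "lin_subspace (fdom t)" by (rule sesq_on_lin_subspace[OF S])
  have zD: "z n \<in> fdom t" for n using approx form_Cauchy_in_fdom[OF S P] unfolding approximates_def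
    by blast
  show "is_closable_form r" "lin_subspace (fdom r)" "u1 \<in> fdom r" "hnorm u1 = 1"
    using rD sub u1 by simp_all
  show "x - z n \<in> fdom r" for n using zD x rD(4) lin_subspace_diff[OF sub] by simp
  show "\<forall>e>0. \<exists>N. \<forall>m\<ge>N. \<forall>n\<ge>N. quad (fval r) ((x - z m) - (x - z n)) < e"
  proof (intro allI impI)
    fix e :: real assume "0 < e"
    then obtain N where N: "\<forall>m\<ge>N. \<forall>n\<ge>N. quad (fval t) (z m - z n) < e"
      using approx unfolding approximates_def form_Cauchy_def by blast
    have "quad (fval r) ((x - z m) - (x - z n)) < e" if "N \<le> m" "N \<le> n" for m n
    proof -
      have "quad (fval r) (z n - z m) \<le> quad (fval t) (z n - z m)"
        using rD(7) zD lin_subspace_diff[OF sub] by blast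
      thus ?thesis using N that by fastforce
    qed
    thus "\<exists>N. \<forall>m\<ge>N. \<forall>n\<ge>N. quad (fval r) ((x - z m) - (x - z n)) < e"
      by blast
  qed
  show "hconverges (\<lambda>n. x - z n) 0"
    using approx unfolding approximates_def hconverges_def by (simp add: hnorm_diff_commute)
qed

lemma regular_candidate_le_lsc_quad:
  fixes t :: "'a::complex_inner sform"
  assumes S: "sesq_on (fdom t) (fval t)" and P: "pos_on (fdom t) (fval t)"
    and u1: "u1 \<in> fdom t" "hnorm u1 = 1"
    and r: "r \<in> regular_candidates t" and x: "x \<in> fdom t"
  shows "quad (fval r) x \<le> lsc_quad t x"
proof (rule lsc_quad_greatest[OF S P fdom_in_lsc_dom[OF S P x]])
  fix z assume approx: "approximates t x z"
  note rD = regular_candidatesD[OF r]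
  have sub: "lin_subspace (fdom t)" by (rule sesq_on_lin_subspace[OF S])
  have zD: "z n \<in> fdom t" for n using approx form_Cauchy_in_fdom[OF S P] unfolding approximates_def
    by blast
  have bnd: "sqrt (quad (fval r) x) \<le> sqrt (quad (fval t) (z n)) + sqrt (quad (fval r) (x - z n))" for n
  proof -
    have "sqrt (quad (fval r) x) \<le> sqrt (quad (fval r) (z n)) + sqrt (quad (fval r) (x - z n))"
      using sqrt_quad_add_le[OF rD(5,6) zD[of n], of "x - z n"] x lin_subspace_diff[OF sub] zD by simp
    moreover have "sqrt (quad (fval r) (z n)) \<le> sqrt (quad (fval t) (z n))"
      using rD(7)[OF zD] by (rule real_sqrt_le_mono)
    ultimately show ?thesis by linarith
  qed
  have "(\<lambda>n. sqrt (quad (fval t) (z n)) + sqrt (quad (fval r) (x - z n))) \<longlonglongrightarrow> sqrt (lim_quad t z) + sqrt 0"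
    using form_Cauchy_quad_tendsto[OF S P] approx regular_candidate_quad_diff_tendsto_zero[OF S P u1 r x approx]
    unfolding approximates_def by (intro tendsto_intros) auto
  hence "sqrt (quad (fval r) x) \<le> sqrt (lim_quad t z) + sqrt 0"
    by (rule LIMSEQ_le_const) (use bnd in blast)
  thus "quad (fval r) x \<le> lim_quad t z" by simp
qed

lemma lsc_part_regular_candidate:
  fixes t :: "'a::chilbert sform"
  assumes B: "bilinear_form t" and Pt: "positive_form t"
    and u1: "u1 \<in> fdom t" "hnorm u1 = 1"
  shows "lsc_part t \<in> regular_candidates t"
proof -
  have tS: "is_sesq_form t" using B by (simp add: bilinear_form_def)
  have S: "sesq_on (fdom t) (fval t)" by (rule sesq_on_fval[OF tS])
  have P: "pos_on (fdom t) (fval t)" by (rule pos_on_fval[OF Pt])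
  have subD: "lin_subspace (fdom t)" by (rule sesq_on_lin_subspace[OF S])
  have dom_le: "fdom t \<subseteq> lsc_dom t" using fdom_in_lsc_dom[OF S P] by blast
  have Sr: "sesq_on (fdom t) (lsc_form t)"
    by (rule sesq_on_subset[OF sesq_on_lsc_form[OF S P] subD dom_le])
  have bil: "bilinear_form (lsc_part t)"
    unfolding bilinear_form_def lsc_part_def using is_sesq_form_restrict_form[OF Sr] B
      by (simp add: bilinear_form_def)
  have pos: "positive_form (lsc_part t)"
    unfolding positive_form_def lsc_part_def fval_restrict_form fdom_restrict_form
    using pos_on_lsc_form[OF S P] dom_le unfolding pos_on_def by auto
  have pse: "positive_form (restrict_form (lsc_dom t) (lsc_form t))"
    unfolding positive_form_def fval_restrict_form fdom_restrict_form
    using pos_on_lsc_form[OF S P] unfolding pos_on_def by auto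
  have clos: "is_closable_form (lsc_part t)"
    unfolding is_closable_form_def
  proof (intro exI conjI)
    show "is_sesq_form (restrict_form (lsc_dom t) (lsc_form t))"
      by (rule is_sesq_form_restrict_form[OF sesq_on_lsc_form[OF S P]])
    show "positive_form (restrict_form (lsc_dom t) (lsc_form t))" by (rule pse)
    show "is_closed_form (restrict_form (lsc_dom t) (lsc_form t))"
      by (rule is_closed_form_lsc_extension[OF S P u1])
    show "fdom (lsc_part t) \<subseteq> fdom (restrict_form (lsc_dom t) (lsc_form t))"
      unfolding lsc_part_def using dom_le by simp
    show "\<forall>x\<in>fdom (lsc_part t). \<forall>y\<in>fdom (lsc_part t). fval (restrict_form (lsc_dom t) (lsc_form t)) x y = fval (lsc_part t) x y"
      unfolding lsc_part_def fval_restrict_form using dom_le by auto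
  qed
  have le: "\<forall>x\<in>fdom t. Re (fval (lsc_part t) x x) \<le> Re (fval t x x)"
    unfolding lsc_part_def fval_restrict_form using lsc_form_diag[OF S P] dom_le lsc_quad_le_quad[OF S P]
      by (auto simp: quad_def)
  show ?thesis unfolding regular_candidates_def using bil pos clos le by (simp add: lsc_part_def)
qed

lemma regular_part_eq_lsc_part:
  fixes t :: "'a::chilbert sform"
  assumes B: "bilinear_form t" and Pt: "positive_form t"
    and u1: "u1 \<in> fdom t" "hnorm u1 = 1"
  shows "regular_part t = lsc_part t"
proof -
  have S: "sesq_on (fdom t) (fval t)"
    by (rule sesq_on_fval) (use B in \<open>simp add: bilinear_form_def\<close>)
  have P: "pos_on (fdom t) (fval t)" by (rule pos_on_fval[OF Pt])
  have rc: "lsc_part t \<in> regular_candidates t" by (rule lsc_part_regular_candidate[OF B Pt u1])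
  have rdiag: "Re (fval (lsc_part t) x x) = lsc_quad t x" if "x \<in> fdom t" for x
    unfolding lsc_part_def fval_restrict_form using lsc_form_diag[OF S P] fdom_in_lsc_dom[OF S P] that
      by auto
  have rmax: "\<forall>r'\<in>regular_candidates t. \<forall>x\<in>fdom t. Re (fval r' x x) \<le> Re (fval (lsc_part t) x x)"
    using regular_candidate_le_lsc_quad[OF S P u1] rdiag by (auto simp: quad_def)
  show ?thesis unfolding regular_part_def
  proof (rule the_equality)
    show "lsc_part t \<in> regular_candidates t \<and> (\<forall>r'\<in>regular_candidates t. \<forall>x\<in>fdom t. Re (fval r' x x) \<le> Re (fval (lsc_part t) x x))"
      using rc rmax by blast
  next
    fix r assume a: "r \<in> regular_candidates t \<and> (\<forall>r'\<in>regular_candidates t. \<forall>x\<in>fdom t. Re (fval r' x x) \<le> Re (fval r x x))"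
    note rD = regular_candidatesD[OF conjunct1[OF a]] and pD = regular_candidatesD[OF rc]
    show "r = lsc_part t"
    proof (rule sesq_form_eqI[OF rD(1) pD(1)])
      show "fdom r = fdom (lsc_part t)" using rD(4) pD(4) by simp
      fix x assume "x \<in> fdom r"
      hence x: "x \<in> fdom t" using rD(4) by simp
      have "Re (fval r x x) = Re (fval (lsc_part t) x x)" using a rc rmax x by (meson order_antisym)
      moreover have "Im (fval r x x) = 0" "Im (fval (lsc_part t) x x) = 0"
        using rD(2,4) pD(2,4) x unfolding positive_form_def by auto
      ultimately show "fval r x x = fval (lsc_part t) x x" by (simp add: complex_eq_iff)
    qed
  qed
qed

lemma infinite_dimensional_ex_nonzero:
  assumes "infinite_dimensional (UNIV :: 'a::complex_inner set)"
  shows "\<exists>v::'a. v \<noteq> 0"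
proof -
  have "cspan ({}::'a set) \<noteq> UNIV" using assms unfolding infinite_dimensional_def by blast
  moreover have "cspan ({}::'a set) = {0}" unfolding cspan_def by auto
  ultimately show ?thesis by auto
qed
lemma dense_subspace_ex_unit:
  assumes v: "(v::'a::complex_inner) \<noteq> 0" and D: "dense_set (D::'a set)" "lin_subspace D"
  shows "\<exists>u\<in>D. hnorm u = 1"
proof -
  have hv: "0 < hnorm v" using v hnorm_eq_0 hnorm_nonneg by (metis order_le_less)
  obtain y where y: "y \<in> D" "hnorm (v - y) < hnorm v" using D(1) hv unfolding dense_set_def by blast
  have "y \<noteq> 0" using y by auto
  hence hy: "0 < hnorm y" using hnorm_eq_0 hnorm_nonneg by (metis order_le_less)
  let ?u = "scaleC (complex_of_real (1 / hnorm y)) y"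
  have "?u \<in> D" using y lin_subspace_scaleC[OF D(2)] by blast
  moreover have "hnorm ?u = 1" using hy by (simp add: hnorm_scaleC norm_divide)
  ultimately show ?thesis by blast
qed

lemma VfD:
  assumes "t \<in> Vf"
  shows "is_sesq_form t" "bilinear_form t" "positive_form t" "dense_set (fdom t)"
    "sesq_on (fdom t) (fval t)" "pos_on (fdom t) (fval t)" "lin_subspace (fdom t)"
    "bounded_form t \<Longrightarrow> fdom t = UNIV"
  using assms unfolding Vf_def bilinear_form_def
  by (auto intro: sesq_on_fval pos_on_fval simp: is_sesq_form_def)

lemma regular_part_regular_candidate:
  fixes t :: "'a::chilbert sform"
  assumes nontrivial: "\<exists>v::'a. v \<noteq> 0" and t: "t \<in> Vf"
  shows "regular_part t \<in> regular_candidates t"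
proof -
  obtain v :: 'a where "v \<noteq> 0" using nontrivial by blast
  then obtain u where u: "u \<in> fdom t" "hnorm u = 1" using dense_subspace_ex_unit VfD[OF t] by blast
  show ?thesis
    using regular_part_eq_lsc_part[OF VfD(2,3)[OF t] u] lsc_part_regular_candidate[OF VfD(2,3)[OF t] u]
      by simp
qed

section \<open>Regular and singular forms under the partial sum\<close>

lemma regular_form_iff:
  assumes "fdom (regular_part t) = fdom t"
  shows "regular_form t \<longleftrightarrow> (\<forall>x\<in>fdom t. \<forall>y\<in>fdom t. fval t x y = fval (regular_part t) x y)"
  unfolding regular_form_def singular_part_def is_zero_form_def form_diff_def fdom_def fval_def
  using assms by (auto simp: fdom_def)

lemma singular_form_iff:
  assumes "fdom (regular_part t) = fdom t"
  shows "singular_form t \<longleftrightarrow> (\<forall>x\<in>fdom t. \<forall>y\<in>fdom t. fval (regular_part t) x y = 0)"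
  unfolding singular_form_def is_zero_form_def using assms by simp

lemma fdom_form_add [simp]: "fdom (form_add t s) = fdom t \<inter> fdom s"
  by (simp add: form_add_def fdom_def)
lemma fval_form_add: "fval (form_add t s) x y =
   (if x \<in> fdom t \<inter> fdom s \<and> y \<in> fdom t \<inter> fdom s then fval t x y + fval s x y else 0)"
  by (simp add: form_add_def fval_def)

lemma form_add_comm: "form_add t s = form_add s t"
  unfolding form_add_def by (auto simp: Int_commute add.commute intro!: ext)

lemma oplus_bar_comm: "oplus_bar t s = oplus_bar s t"
  unfolding oplus_bar_def oplus_defined_def
    using form_add_comm[of t s] form_add_comm[of "regular_part t" "regular_part s"] by auto

lemma bounded_form_quad_le:
  assumes "bounded_form s" "fdom s = UNIV" "sesq_on UNIV (fval s)" "pos_on UNIV (fval s)"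
  shows "\<exists>K\<ge>0. \<forall>x. quad (fval s) x \<le> K * (hnorm x)^2"
proof -
  obtain K0 where K0: "\<And>x. hnorm x = 1 \<Longrightarrow> Re (fval s x x) \<le> K0"
    using assms(1,2) unfolding bounded_form_def bdd_above_def by auto
  let ?K = "max K0 0"
  have "quad (fval s) x \<le> ?K * (hnorm x)^2" for x
  proof (cases "x = 0")
    case True thus ?thesis using sesq_on_zero_left[OF assms(3)] by (simp add: quad_def)
  next
    case False
    hence hx: "0 < hnorm x" using hnorm_eq_0 hnorm_nonneg by (metis order_le_less)
    let ?u = "scaleC (complex_of_real (1 / hnorm x)) x"
    have "hnorm ?u = 1" using hx by (simp add: hnorm_scaleC norm_divide)
    hence "quad (fval s) ?u \<le> K0" using K0 by (simp add: quad_def)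
    moreover have "quad (fval s) ?u = (1 / hnorm x)^2 * quad (fval s) x"
      using quad_scaleC[OF assms(3) assms(4) UNIV_I, where c="complex_of_real (1 / hnorm x)" and x=x]
      by (simp add: power_one_over norm_divide)
    ultimately have "(1 / hnorm x)^2 * quad (fval s) x \<le> ?K" by simp
    hence "quad (fval s) x \<le> ?K * (hnorm x)^2" using hx by (simp add: field_simps)
    thus ?thesis .
  qed
  thus ?thesis by (intro exI[of _ ?K]) auto
qed

lemma sesq_on_zero_if_quad_zero_on_dense:
  fixes f :: "'a::complex_inner \<Rightarrow> 'a \<Rightarrow> complex"
  assumes S: "sesq_on UNIV f" and P: "pos_on UNIV f" and K: "\<forall>x. quad f x \<le> K * (hnorm x)^2" "0 \<le> K"
    and E: "dense_set E" "\<forall>x\<in>E. quad f x = 0"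
  shows "f x y = 0"
proof -
  have qz: "quad f z = 0" for z
  proof -
    have "sqrt (quad f z) \<le> 0"
    proof (rule field_le_epsilon)
      fix e :: real assume e: "0 < e"
      have "0 < e / (sqrt K + 1)" using e K(2) by (simp add: add_nonneg_pos)
      then obtain y where y: "y \<in> E" "hnorm (z - y) < e / (sqrt K + 1)"
        using E(1) unfolding dense_set_def by blast
      have "z = y + (z - y)" by simp
      hence "sqrt (quad f z) \<le> sqrt (quad f y) + sqrt (quad f (z - y))"
        using sqrt_quad_add_le[OF S P UNIV_I UNIV_I, of y "z - y"] by simp
      also have "\<dots> = sqrt (quad f (z - y))" using E(2) y(1) by simp
      also have "\<dots> \<le> sqrt (K * (hnorm (z - y))^2)" using K(1) by simp
      also have "\<dots> = sqrt K * hnorm (z - y)" by (simp add: real_sqrt_mult)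
      also have "\<dots> \<le> sqrt K * (e / (sqrt K + 1))" using y(2) K(2)
        by (intro mult_left_mono) auto
      also have "\<dots> \<le> e"
      proof -
        have "sqrt K / (sqrt K + 1) \<le> 1" using K(2) by (simp add: add_nonneg_pos)
        hence "(sqrt K / (sqrt K + 1)) * e \<le> e" using e K(2) by (intro mult_left_le_one_le) auto
        thus ?thesis by (simp add: mult.commute)
      qed
      finally show "sqrt (quad f z) \<le> 0 + e" by simp
    qed
    thus ?thesis using quad_nonneg[OF S P UNIV_I, of z] by simp
  qed
  have "\<forall>z\<in>UNIV. f z z = 0" using diag_eq_quad[OF S P] qz by simp
  thus ?thesis using sesq_on_zero_if_diag_zero[OF S] by blast
qed

lemma sesq_on_diff: "sesq_on D f \<Longrightarrow> sesq_on D g \<Longrightarrow> sesq_on D (\<lambda>x y. f x y - g x y)"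
  unfolding sesq_on_def by (auto simp: algebra_simps)

lemma oplus_defined_zero_extends:
  fixes t s :: "'a::complex_inner sform"
  assumes t: "t \<in> Vf" and s: "s \<in> Vf" and od: "oplus_defined t s"
    and g: "sesq_on (fdom s) g" "pos_on (fdom s) g" "\<forall>x\<in>fdom s. quad g x \<le> quad (fval s) x"
    and z: "\<forall>x\<in>fdom t \<inter> fdom s. \<forall>y\<in>fdom t \<inter> fdom s. g x y = 0"
  shows "\<forall>x\<in>fdom s. \<forall>y\<in>fdom s. g x y = 0"
proof (cases "fdom t = fdom s \<or> bounded_form t")
  case True
  hence "fdom t \<inter> fdom s = fdom s" using VfD(8)[OF t] by auto
  thus ?thesis using z by simp
next
  case False
  hence bs: "bounded_form s" using od unfolding oplus_defined_def by blast
  have U: "fdom s = UNIV" using VfD(8)[OF s bs] .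
  obtain K where K: "K \<ge> 0" "\<forall>x. quad (fval s) x \<le> K * (hnorm x)^2"
    using bounded_form_quad_le[OF bs U] VfD(5,6)[OF s] U by auto
  have gS: "sesq_on UNIV g" "pos_on UNIV g" using g U by auto
  have gK: "\<forall>x. quad g x \<le> K * (hnorm x)^2" using g(3) K U by (metis UNIV_I order_trans)
  have gz: "\<forall>x\<in>fdom t. quad g x = 0" using z U by (simp add: quad_def)
  show ?thesis using sesq_on_zero_if_quad_zero_on_dense[OF gS gK K(1) VfD(4)[OF t] gz] by blast
qed

lemma oplus_bar_SomeD:
  fixes t s w :: "'a::complex_inner sform"
  assumes "oplus_bar t s = Some w"
  shows "oplus_defined t s" "w = form_add t s" "regular_part w = form_add (regular_part t) (regular_part s)"
  using assms unfolding oplus_bar_def by (auto split: if_splits)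

lemma zero_form_in_Vf: "(zero_form :: 'a::complex_inner sform) \<in> Vf"
proof -
  have d: "dense_set (UNIV :: 'a set)" unfolding dense_set_def
  proof (intro allI impI)
    fix x :: 'a and e :: real assume "0 < e"
    thus "\<exists>y\<in>UNIV. hnorm (x - y) < e" by (intro bexI[of _ x]) auto
  qed
  thus ?thesis
    unfolding Vf_def bilinear_form_def is_sesq_form_def positive_form_def lin_subspace_def
      zero_form_def fdom_def fval_def by auto
qed

context
  assumes nontrivial: "\<exists>v::'h::chilbert. v \<noteq> 0"
begin

lemma regular_partD:
  fixes t :: "'h sform"
  assumes "t \<in> Vf"
  shows "fdom (regular_part t) = fdom t" "sesq_on (fdom t) (fval (regular_part t))"
    "pos_on (fdom t) (fval (regular_part t))"
    "\<And>x. x \<in> fdom t \<Longrightarrow> quad (fval (regular_part t)) x \<le> quad (fval t) x"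
  using regular_candidatesD[OF regular_part_regular_candidate[OF nontrivial assms]] by auto

lemma fval_oplus_bar:
  fixes t s w :: "'h sform"
  assumes t: "t \<in> Vf" and s: "s \<in> Vf" and o: "oplus_bar t s = Some w"
    and xy: "x \<in> fdom t \<inter> fdom s" "y \<in> fdom t \<inter> fdom s"
  shows "fval (regular_part w) x y = fval (regular_part t) x y + fval (regular_part s) x y"
    "fval w x y = fval t x y + fval s x y"
  using xy oplus_bar_SomeD[OF o] regular_partD(1)[OF t] regular_partD(1)[OF s]
    by (auto simp: fval_form_add)

lemma fdom_oplus_bar:
  fixes t s w :: "'h sform"
  assumes t: "t \<in> Vf" and s: "s \<in> Vf" and o: "oplus_bar t s = Some w"
  shows "fdom (regular_part w) = fdom w" "fdom w = fdom t \<inter> fdom s"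
  using oplus_bar_SomeD[OF o] regular_partD(1)[OF t] regular_partD(1)[OF s] by auto

lemma regular_form_oplus_bar:
  fixes t s w :: "'h sform"
  assumes t: "t \<in> Vf" and s: "s \<in> Vf" and o: "oplus_bar t s = Some w"
    and rt: "regular_form t" and rs: "regular_form s"
  shows "regular_form w"
proof -
  have et: "\<forall>x\<in>fdom t. \<forall>y\<in>fdom t. fval t x y = fval (regular_part t) x y"
    using rt regular_form_iff regular_partD(1)[OF t] by blast
  have es: "\<forall>x\<in>fdom s. \<forall>y\<in>fdom s. fval s x y = fval (regular_part s) x y"
    using rs regular_form_iff regular_partD(1)[OF s] by blast
  show ?thesis unfolding regular_form_iff[OF fdom_oplus_bar(1)[OF t s o]] fdom_oplus_bar(2)[OF t s o]
    using fval_oplus_bar[OF t s o] et es by auto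
qed

lemma regular_form_oplus_bar_cancel:
  fixes t s w :: "'h sform"
  assumes t: "t \<in> Vf" and s: "s \<in> Vf" and o: "oplus_bar t s = Some w"
    and rt: "regular_form t" and rw: "regular_form w"
  shows "regular_form s"
proof -
  have et: "\<forall>x\<in>fdom t. \<forall>y\<in>fdom t. fval t x y = fval (regular_part t) x y"
    using rt regular_form_iff regular_partD(1)[OF t] by blast
  have ew: "\<forall>x\<in>fdom t \<inter> fdom s. \<forall>y\<in>fdom t \<inter> fdom s. fval w x y = fval (regular_part w) x y"
    using rw regular_form_iff[OF fdom_oplus_bar(1)[OF t s o]] fdom_oplus_bar(2)[OF t s o] by blast
  define g where "g x y = fval s x y - fval (regular_part s) x y" for x y
  have gS: "sesq_on (fdom s) g" unfolding g_def
    by (rule sesq_on_diff[OF VfD(5)[OF s] regular_partD(2)[OF s]])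
  have gP: "pos_on (fdom s) g" unfolding g_def pos_on_def
    using VfD(6)[OF s] regular_partD(3,4)[OF s] unfolding pos_on_def by (auto simp: quad_def)
  have gq: "\<forall>x\<in>fdom s. quad g x \<le> quad (fval s) x" unfolding g_def
    using regular_partD(3)[OF s] unfolding pos_on_def by (auto simp: quad_def)
  have gz: "\<forall>x\<in>fdom t \<inter> fdom s. \<forall>y\<in>fdom t \<inter> fdom s. g x y = 0"
    unfolding g_def using ew et fval_oplus_bar[OF t s o] by auto
  have "\<forall>x\<in>fdom s. \<forall>y\<in>fdom s. g x y = 0"
    by (rule oplus_defined_zero_extends[OF t s oplus_bar_SomeD(1)[OF o] gS gP gq gz])
  thus ?thesis unfolding regular_form_iff[OF regular_partD(1)[OF s]] g_def by simp
qed

lemma singular_form_oplus_bar: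
  fixes t s w :: "'h sform"
  assumes t: "t \<in> Vf" and s: "s \<in> Vf" and o: "oplus_bar t s = Some w"
    and rt: "singular_form t" and rs: "singular_form s"
  shows "singular_form w"
proof -
  have et: "\<forall>x\<in>fdom t. \<forall>y\<in>fdom t. fval (regular_part t) x y = 0"
    using rt singular_form_iff regular_partD(1)[OF t] by blast
  have es: "\<forall>x\<in>fdom s. \<forall>y\<in>fdom s. fval (regular_part s) x y = 0"
    using rs singular_form_iff regular_partD(1)[OF s] by blast
  show ?thesis unfolding singular_form_iff[OF fdom_oplus_bar(1)[OF t s o]] fdom_oplus_bar(2)[OF t s o]
    using fval_oplus_bar[OF t s o] et es by auto
qed

lemma singular_form_oplus_bar_cancel:
  fixes t s w :: "'h sform"
  assumes t: "t \<in> Vf" and s: "s \<in> Vf" and o: "oplus_bar t s = Some w"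
    and rt: "singular_form t" and rw: "singular_form w"
  shows "singular_form s"
proof -
  have et: "\<forall>x\<in>fdom t. \<forall>y\<in>fdom t. fval (regular_part t) x y = 0"
    using rt singular_form_iff regular_partD(1)[OF t] by blast
  have ew: "\<forall>x\<in>fdom t \<inter> fdom s. \<forall>y\<in>fdom t \<inter> fdom s. fval (regular_part w) x y = 0"
    using rw singular_form_iff[OF fdom_oplus_bar(1)[OF t s o]] fdom_oplus_bar(2)[OF t s o] by blast
  have gq: "\<forall>x\<in>fdom s. quad (fval (regular_part s)) x \<le> quad (fval s) x"
    using regular_partD(4)[OF s] by blast
  have gz: "\<forall>x\<in>fdom t \<inter> fdom s. \<forall>y\<in>fdom t \<inter> fdom s. fval (regular_part s) x y = 0"
    using ew et fval_oplus_bar[OF t s o] by auto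
  have "\<forall>x\<in>fdom s. \<forall>y\<in>fdom s. fval (regular_part s) x y = 0"
    by (rule oplus_defined_zero_extends[OF t s oplus_bar_SomeD(1)[OF o] regular_partD(2,3)[OF s] gq gz])
  thus ?thesis unfolding singular_form_iff[OF regular_partD(1)[OF s]] .
qed

lemma fval_regular_part_zero_form: "\<forall>x y. fval (regular_part (zero_form :: 'h sform)) x y = 0"
proof -
  have dz: "fdom (zero_form :: 'h sform) = UNIV" "fval (zero_form :: 'h sform) = (\<lambda>x y. 0)"
    by (simp_all add: zero_form_def fdom_def fval_def)
  have S: "sesq_on UNIV (fval (regular_part (zero_form :: 'h sform)))"
    using regular_partD(2)[OF zero_form_in_Vf] dz by simp
  have P: "pos_on UNIV (fval (regular_part (zero_form :: 'h sform)))"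
    using regular_partD(3)[OF zero_form_in_Vf] dz by simp
  have q: "quad (fval (regular_part (zero_form :: 'h sform))) x \<le> 0" for x
    using regular_partD(4)[OF zero_form_in_Vf] dz by (simp add: quad_def)
  have "\<forall>z\<in>UNIV. fval (regular_part (zero_form :: 'h sform)) z z = 0"
    using diag_eq_quad[OF S P] q quad_nonneg[OF S P] by (metis UNIV_I order_antisym of_real_0)
  thus ?thesis using sesq_on_zero_if_diag_zero[OF S] by blast
qed

lemma regular_form_zero_form: "regular_form (zero_form :: 'h sform)"
  unfolding regular_form_iff[OF regular_partD(1)[OF zero_form_in_Vf]] using fval_regular_part_zero_form
    by (simp add: zero_form_def fval_def)

lemma singular_form_zero_form: "singular_form (zero_form :: 'h sform)"
  unfolding singular_form_iff[OF regular_partD(1)[OF zero_form_in_Vf]] using fval_regular_part_zero_form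
    by simp

lemma regular_forms_closed:
  fixes t s w :: "'h sform"
  assumes v: "t \<in> Vf" "s \<in> Vf" and o: "oplus_bar t s = Some w"
    and h: "(regular_form t \<and> regular_form s) \<or> (regular_form t \<and> regular_form w) \<or> (regular_form s \<and> regular_form w)"
  shows "regular_form t \<and> regular_form s \<and> regular_form w"
proof -
  have o': "oplus_bar s t = Some w" using o oplus_bar_comm by metis
  show ?thesis
    using h regular_form_oplus_bar[OF v(1,2) o] regular_form_oplus_bar_cancel[OF v(1,2) o] regular_form_oplus_bar_cancel[OF v(2,1) o']
      by blast
qed

lemma singular_forms_closed:
  fixes t s w :: "'h sform"
  assumes v: "t \<in> Vf" "s \<in> Vf" and o: "oplus_bar t s = Some w"
    and h: "(singular_form t \<and> singular_form s) \<or> (singular_form t \<and> singular_form w) \<or> (singular_form s \<and> singular_form w)"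
  shows "singular_form t \<and> singular_form s \<and> singular_form w"
proof -
  have o': "oplus_bar s t = Some w" using o oplus_bar_comm by metis
  show ?thesis
    using h singular_form_oplus_bar[OF v(1,2) o] singular_form_oplus_bar_cancel[OF v(1,2) o] singular_form_oplus_bar_cancel[OF v(2,1) o']
      by blast
qed

lemma sub_gea_Rf: "sub_gea (Vf :: 'h sform set) oplus_bar zero_form Rf"
  unfolding sub_gea_def Rf_def using zero_form_in_Vf regular_form_zero_form regular_forms_closed by blast

lemma sub_gea_Sf: "sub_gea (Vf :: 'h sform set) oplus_bar zero_form Sf"
  unfolding sub_gea_def Sf_def using zero_form_in_Vf singular_form_zero_form singular_forms_closed
    by blast

end

theorem theorem4p20:
  assumes "infinite_dimensional (UNIV :: 'h::chilbert set)"
  shows "sub_gea (Vf :: 'h sform set) oplus_bar zero_form Rf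
       \<and> sub_gea (Vf :: 'h sform set) oplus_bar zero_form Sf"
  using sub_gea_Rf sub_gea_Sf infinite_dimensional_ex_nonzero[OF assms] by blast

end
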